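(* (Spinless case.) Let $1\le M\le N$ be integers and let $G$ be the $M\times N$ grid graph (the interaction graph of the spinless $M\times N$ Fermi–Hubbard model). Then $d_{\mathrm{swap}}(G)=M-1$, and moreover there exists a swap network for $G$ with swap depth $M-1$ whose number of interaction layers equals the minimum number of interaction layers over all swap networks for $G$. (Spin case.) Let $2\le M\le N$ be integers and let $G'$ be the $2\times M\times N$ grid graph (the interaction graph of the $M\times N$ Fermi–Hubbard model with spin). Then $d_{\mathrm{swap}}(G')=2M-1$, and there exists a swap network for $G'$ with swap depth $2M-1$ and six interaction layers.
   Context: Grid graphs: the $M\times N$ grid graph has vertex set $\{(m,n): 0\le m<M,\ 0\le n<N\}$ with edges joining $(m,n),(m+1,n)$ and $(m,n),(m,n+1)$ whenever both endpoints exist; more generally the $M_1\times\cdots\times M_k$ grid graph is the Cartesian product of paths with $M_1,\ldots,M_k$ vertices (vertices are integer tuples with $0\le x_i<M_i$, adjacent iff they differ by $1$ in exactly one coordinate). Linear-connectivity swap network model: for a graph $G=(V,E)$ with $|V|=n$, qubits occupy positions $0,\ldots,n-1$ on a line; a configuration is a bijection $\pi:V\to\{0,\ldots,n-1\}$; a swap layer is a set of pairwise disjoint pairs of adjacent positions $\{i,i+1\}$, and applying it exchanges the vertices at the two positions of each pair. A swap network for $G$ consists of an initial configuration $\pi_0$ (chosen freely), swap layers $L_1,\ldots,L_d$ producing configurations $\pi_0,\ldots,\pi_d$, and a sequence of interaction layers, each attached to some configuration $\pi_t$ (several may be attached to the same configuration); an interaction layer at $\pi_t$ is a set of pairwise disjoint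 edges $\{v,w\}\in E$ with $|\pi_t(v)-\pi_t(w)|=1$. Every edge of $G$ must belong to some interaction layer. The swap depth is $d$; the number of interaction layers is the interaction depth. $d_{\mathrm{swap}}(G)$ is the minimum swap depth over all swap networks for $G$. *)

theory Defs
  imports Main
begin

definition grid2_V :: "nat \<Rightarrow> nat \<Rightarrow> (nat \<times> nat) set" where
  "grid2_V M N = {(m, n). m < M \<and> n < N}"

definition grid2_E :: "nat \<Rightarrow> nat \<Rightarrow> (nat \<times> nat) set set" where
  "grid2_E M N =
     {{(m, n), (m + 1, n)} | m n. m + 1 < M \<and> n < N} \<union>
     {{(m, n), (m, n + 1)} | m n. m < M \<and> n + 1 < N}"

definition grid3_V :: "nat \<Rightarrow> nat \<Rightarrow> nat \<Rightarrow> (nat \<times> nat \<times> nat) set" where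
  "grid3_V A M N = {(a, m, n). a < A \<and> m < M \<and> n < N}"

definition grid3_E :: "nat \<Rightarrow> nat \<Rightarrow> nat \<Rightarrow> (nat \<times> nat \<times> nat) set set" where
  "grid3_E A M N =
     {{(a, m, n), (a + 1, m, n)} | a m n. a + 1 < A \<and> m < M \<and> n < N} \<union>
     {{(a, m, n), (a, m + 1, n)} | a m n. a < A \<and> m + 1 < M \<and> n < N} \<union>
     {{(a, m, n), (a, m, n + 1)} | a m n. a < A \<and> m < M \<and> n + 1 < N}"

text \<open>A swap layer on n positions is represented by the set of left positions i of
  its pairs {i, i+1}; pairs must be disjoint and inside {0..<n}.\<close>

definition swap_layer :: "nat \<Rightarrow> nat set \<Rightarrow> bool" where
  "swap_layer n L \<longleftrightarrow> (\<forall>i\<in>L. i + 1 < n \<and> i + 1 \<notin> L)"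

definition swap_pos :: "nat set \<Rightarrow> nat \<Rightarrow> nat" where
  "swap_pos L p = (if p \<in> L then p + 1 else if 0 < p \<and> p - 1 \<in> L then p - 1 else p)"

definition config :: "('v \<Rightarrow> nat) \<Rightarrow> nat set list \<Rightarrow> nat \<Rightarrow> 'v \<Rightarrow> nat" where
  "config \<pi>0 Ls t = foldl (\<lambda>\<pi> L. swap_pos L \<circ> \<pi>) \<pi>0 (take t Ls)"

definition interaction_layer :: "'v set set \<Rightarrow> ('v \<Rightarrow> nat) \<Rightarrow> 'v set set \<Rightarrow> bool" where
  "interaction_layer E \<pi> I \<longleftrightarrow>
     I \<subseteq> E \<and>
     (\<forall>e\<in>I. \<forall>e'\<in>I. e \<noteq> e' \<longrightarrow> e \<inter> e' = {}) \<and>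
     (\<forall>e\<in>I. \<exists>v w. e = {v, w} \<and> (\<pi> v + 1 = \<pi> w \<or> \<pi> w + 1 = \<pi> v))"

text \<open>A swap network: initial configuration, list of swap layers (swap depth = length),
  and list of interaction layers, each attached to a configuration index t \<le> depth
  (interaction depth = length).\<close>
definition swap_network ::
  "'v set \<Rightarrow> 'v set set \<Rightarrow> ('v \<Rightarrow> nat) \<Rightarrow> nat set list \<Rightarrow> (nat \<times> 'v set set) list \<Rightarrow> bool" where
  "swap_network V E \<pi>0 Ls Is \<longleftrightarrow>
     bij_betw \<pi>0 V {0..<card V} \<and>
     (\<forall>L\<in>set Ls. swap_layer (card V) L) \<and>
     (\<forall>(t, I)\<in>set Is. t \<le> length Ls \<and> interaction_layer E (config \<pi>0 Ls t) I) \<and>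
     (\<forall>e\<in>E. \<exists>(t, I)\<in>set Is. e \<in> I)"

definition d_swap :: "'v set \<Rightarrow> 'v set set \<Rightarrow> nat" where
  "d_swap V E = (LEAST d. \<exists>\<pi>0 Ls Is. swap_network V E \<pi>0 Ls Is \<and> length Ls = d)"

definition min_interaction_depth :: "'v set \<Rightarrow> 'v set set \<Rightarrow> nat" where
  "min_interaction_depth V E = (LEAST k. \<exists>\<pi>0 Ls Is. swap_network V E \<pi>0 Ls Is \<and> length Is = k)"

end

theory Submission
  imports Defs
begin

text \<open>Cut the initial line of qubits after position \<open>k\<close>. Every vertex left of the cut
  with a neighbour right of it must at some time stand next to a vertex from the right part. A
  vertex of the left part that has not yet done so stays at distance at least 2 from the leftmost
  right-part vertex, and a layer moves everything by at most one position, so each swap layer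
  lets at most one further left vertex meet the right part: after \<open>d\<close> layers at most \<open>d + 1\<close> have.
  An isoperimetric argument shows that some cut of any arrangement of the \<open>M \<times> N\<close> grid,
  \<open>M \<le> N\<close>, has \<open>M\<close> boundary vertices, and \<open>2 * M\<close> for the two-layer grid. Hence
  \<open>d \<ge> M - 1\<close>, resp. \<open>d \<ge> 2 * M - 1\<close>.

  Lay the grid out column by column (with the entries of every other column swapped
  in pairs when the column height is even, and the two spin layers interleaved row by row) and
  run the odd-even transposition network of the right depth, centred at this layout: two qubits
  at odd distance \<open>2 * k + 1\<close> become adjacent after \<open>k\<close> layers forwards or backwards. Grouping
  the edges by the parity of the positions at which they meet gives interaction layers; in the
  spinless case there are as many as the maximum degree of the grid, which is optimal because the
  edges at one vertex need distinct interaction layers.\<close>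

definition adjacent_at :: "('v \<Rightarrow> nat) \<Rightarrow> 'v \<Rightarrow> 'v \<Rightarrow> bool" where
  "adjacent_at \<pi> v w \<longleftrightarrow> \<pi> v + 1 = \<pi> w \<or> \<pi> w + 1 = \<pi> v"

lemma swap_pos_swap_pos: "swap_layer n L \<Longrightarrow> swap_pos L (swap_pos L p) = p"
  unfolding swap_pos_def swap_layer_def by auto

lemma swap_pos_less: "swap_layer n L \<Longrightarrow> p < n \<Longrightarrow> swap_pos L p < n"
  unfolding swap_pos_def swap_layer_def by auto

lemma swap_pos_le_Suc: "swap_pos L p \<le> Suc p"
  unfolding swap_pos_def by auto

lemma le_Suc_swap_pos: "p \<le> Suc (swap_pos L p)"
  unfolding swap_pos_def by auto

lemma bij_betw_swap_pos: "swap_layer n L \<Longrightarrow> bij_betw (swap_pos L) {0..<n} {0..<n}"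
  by (rule bij_betw_byWitness[where f' = "swap_pos L"])
    (auto simp: swap_pos_swap_pos swap_pos_less)

lemma bij_betw_foldl_swap_pos:
  assumes "\<forall>L\<in>set Ls. swap_layer n L" and "bij_betw \<pi> V {0..<n}"
  shows "bij_betw (foldl (\<lambda>\<pi> L. swap_pos L \<circ> \<pi>) \<pi> Ls) V {0..<n}"
  using assms
proof (induction Ls arbitrary: \<pi>)
  case (Cons L Ls)
  then have "bij_betw (swap_pos L \<circ> \<pi>) V {0..<n}"
    using bij_betw_swap_pos by (auto intro: bij_betw_trans)
  with Cons show ?case by (simp add: comp_def)
qed simp

lemma foldl_swap_pos_rev:
  assumes "\<forall>L\<in>set Ls. swap_layer n L"
  shows "foldl (\<lambda>\<pi> L. swap_pos L \<circ> \<pi>) (foldl (\<lambda>\<pi> L. swap_pos L \<circ> \<pi>) \<pi> (rev Ls)) Ls = \<pi>"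
  using assms by (induction Ls arbitrary: \<pi>) (auto simp: comp_def swap_pos_swap_pos)

lemma config_0 [simp]: "config \<pi>0 Ls 0 = \<pi>0"
  by (simp add: config_def)

lemma config_Suc:
  "t < length Ls \<Longrightarrow> config \<pi>0 Ls (Suc t) v = swap_pos (Ls ! t) (config \<pi>0 Ls t v)"
  by (simp add: config_def take_Suc_conv_app_nth)

lemma config_Suc_back:
  assumes "t < length Ls" and "\<forall>L\<in>set Ls. swap_layer n L"
  shows "config \<pi>0 Ls t v = swap_pos (Ls ! t) (config \<pi>0 Ls (Suc t) v)"
  using assms by (metis config_Suc nth_mem swap_pos_swap_pos)

lemma config_Suc_le: "t < length Ls \<Longrightarrow> config \<pi>0 Ls (Suc t) v \<le> Suc (config \<pi>0 Ls t v)"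
  by (simp add: config_Suc swap_pos_le_Suc)

lemma config_le_Suc: "t < length Ls \<Longrightarrow> config \<pi>0 Ls t v \<le> Suc (config \<pi>0 Ls (Suc t) v)"
  by (simp add: config_Suc le_Suc_swap_pos)

lemma bij_betw_config:
  assumes "\<forall>L\<in>set Ls. swap_layer n L" and "bij_betw \<pi>0 V {0..<n}"
  shows "bij_betw (config \<pi>0 Ls t) V {0..<n}"
  unfolding config_def using assms set_take_subset[of t Ls]
  by (intro bij_betw_foldl_swap_pos) auto

section \<open>Lower bounds for swap networks\<close>

definition cut_boundary :: "'v set \<Rightarrow> 'v set set \<Rightarrow> ('v \<Rightarrow> nat) \<Rightarrow> nat \<Rightarrow> 'v set" where
  "cut_boundary V E f k = {v \<in> V. f v < k \<and> (\<exists>w\<in>V. {v, w} \<in> E \<and> \<not> f w < k)}"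

context
  fixes V :: "'v set" and E \<pi>0 Ls Is
  assumes net: "swap_network V E \<pi>0 Ls Is"
begin

lemma inj_on_config: "inj_on (config \<pi>0 Ls t) V"
  using net bij_betw_config bij_betw_imp_inj_on unfolding swap_network_def by blast

lemma overtaking_needs_adjacency:
  assumes "v \<in> V" "w \<in> V" "\<pi>0 v < \<pi>0 w"
  shows "t \<le> length Ls \<Longrightarrow> config \<pi>0 Ls t w < config \<pi>0 Ls t v \<Longrightarrow>
    \<exists>s<t. adjacent_at (config \<pi>0 Ls s) v w"
proof (induction t)
  case (Suc t)
  show ?case
  proof (cases "config \<pi>0 Ls t w < config \<pi>0 Ls t v")
    case True
    with Suc show ?thesis by (auto intro: less_SucI)
  next
    case False
    moreover have "config \<pi>0 Ls t v \<noteq> config \<pi>0 Ls t w"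
      using inj_onD[OF inj_on_config] assms by fastforce
    moreover have "config \<pi>0 Ls (Suc t) v \<le> Suc (config \<pi>0 Ls t v)"
      "config \<pi>0 Ls t w \<le> Suc (config \<pi>0 Ls (Suc t) w)"
      using Suc.prems config_Suc_le[of t Ls] config_le_Suc[of t Ls] by auto
    ultimately have "config \<pi>0 Ls t v + 1 = config \<pi>0 Ls t w"
      using Suc.prems by linarith
    then show ?thesis unfolding adjacent_at_def by auto
  qed
qed (use assms in simp)

definition met_across :: "nat \<Rightarrow> nat \<Rightarrow> 'v set" where
  "met_across k t =
     {v \<in> V. \<pi>0 v < k \<and> (\<exists>s\<le>t. \<exists>w\<in>V. \<not> \<pi>0 w < k \<and> adjacent_at (config \<pi>0 Ls s) v w)}"

lemma met_across_subset: "met_across k t \<subseteq> {v \<in> V. \<pi>0 v < k}"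
  unfolding met_across_def by blast

lemma not_met_across_far_left:
  assumes "t \<le> length Ls" "v \<in> V" "\<pi>0 v < k" "v \<notin> met_across k t" "w \<in> V" "\<not> \<pi>0 w < k"
  shows "config \<pi>0 Ls t v + 2 \<le> config \<pi>0 Ls t w"
proof -
  have "config \<pi>0 Ls t v \<noteq> config \<pi>0 Ls t w"
    using inj_onD[OF inj_on_config] assms by fastforce
  moreover have "\<not> adjacent_at (config \<pi>0 Ls t) v w"
    using assms unfolding met_across_def by blast
  moreover have "\<not> config \<pi>0 Ls t w < config \<pi>0 Ls t v"
  proof
    assume "config \<pi>0 Ls t w < config \<pi>0 Ls t v"
    moreover have "\<pi>0 v < \<pi>0 w"
      using assms by linarith
    ultimately obtain s where "s < t" "adjacent_at (config \<pi>0 Ls s) v w"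
      using overtaking_needs_adjacency[of v w t] assms by blast
    then show False
      using assms(2-6) unfolding met_across_def by (auto dest: less_imp_le_nat)
  qed
  ultimately show ?thesis unfolding adjacent_at_def by linarith
qed

lemma newly_met_across:
  assumes "t < length Ls" "v \<in> met_across k (Suc t) - met_across k t"
  shows "\<forall>w\<in>V. \<not> \<pi>0 w < k \<longrightarrow> config \<pi>0 Ls (Suc t) v < config \<pi>0 Ls (Suc t) w"
    and "\<exists>w\<in>V. \<not> \<pi>0 w < k \<and> config \<pi>0 Ls (Suc t) w = config \<pi>0 Ls (Suc t) v + 1"
proof -
  have v: "v \<in> V" "\<pi>0 v < k"
    using assms(2) met_across_subset by blast+
  have far: "config \<pi>0 Ls (Suc t) v < config \<pi>0 Ls (Suc t) w" if "w \<in> V" "\<not> \<pi>0 w < k" for w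
  proof -
    have "config \<pi>0 Ls t v + 2 \<le> config \<pi>0 Ls t w"
      using not_met_across_far_left[of t v k w] assms v that by simp
    with config_Suc_le[OF assms(1), of \<pi>0 v] config_le_Suc[OF assms(1), of \<pi>0 w]
    have "config \<pi>0 Ls (Suc t) v \<le> config \<pi>0 Ls (Suc t) w"
      by linarith
    moreover have "v \<noteq> w"
      using v that by auto
    ultimately show ?thesis
      using inj_onD[OF inj_on_config, of "Suc t" v w] v that by fastforce
  qed
  then show "\<forall>w\<in>V. \<not> \<pi>0 w < k \<longrightarrow> config \<pi>0 Ls (Suc t) v < config \<pi>0 Ls (Suc t) w"
    by blast
  obtain w where "w \<in> V" "\<not> \<pi>0 w < k" "adjacent_at (config \<pi>0 Ls (Suc t)) v w"
    using assms(2) unfolding met_across_def by (auto simp: le_Suc_eq)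
  with far show "\<exists>w\<in>V. \<not> \<pi>0 w < k \<and> config \<pi>0 Ls (Suc t) w = config \<pi>0 Ls (Suc t) v + 1"
    unfolding adjacent_at_def by fastforce
qed

lemma newly_met_across_unique:
  assumes "t < length Ls"
    and "x \<in> met_across k (Suc t) - met_across k t" "y \<in> met_across k (Suc t) - met_across k t"
  shows "x = y"
proof -
  let ?c = "config \<pi>0 Ls (Suc t)"
  have not_less: "\<not> ?c a < ?c b"
    if a: "a \<in> met_across k (Suc t) - met_across k t"
      and b: "b \<in> met_across k (Suc t) - met_across k t" for a b
  proof
    assume "?c a < ?c b"
    moreover obtain w where "w \<in> V" "\<not> \<pi>0 w < k" "?c w = ?c a + 1"
      using newly_met_across(2)[OF assms(1) a] by blast
    moreover have "?c b < ?c w"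
      using newly_met_across(1)[OF assms(1) b] calculation(2,3) by blast
    ultimately show False
      by linarith
  qed
  have "?c x = ?c y"
    using not_less[OF assms(2,3)] not_less[OF assms(3,2)] by linarith
  moreover have "x \<in> V" "y \<in> V"
    using assms(2,3) met_across_subset by blast+
  ultimately show ?thesis
    by (rule inj_onD[OF inj_on_config])
qed

lemma card_met_across_le:
  assumes "finite V"
  shows "t \<le> length Ls \<Longrightarrow> card (met_across k t) \<le> Suc t"
proof (induction t)
  case 0
  have "x = y" if "x \<in> met_across k 0" "y \<in> met_across k 0" for x y
  proof -
    have "\<pi>0 x + 1 = k" "\<pi>0 y + 1 = k"
      using that unfolding met_across_def adjacent_at_def by auto
    then show ?thesis
      using that inj_onD[OF inj_on_config, of 0 x y] unfolding met_across_def by auto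
  qed
  then show ?case
    using assms by (simp add: card_le_Suc0_iff_eq met_across_def)
next
  case (Suc t)
  define new where "new = met_across k (Suc t) - met_across k t"
  have fin: "finite (met_across k s)" for s
    using assms met_across_subset finite_subset by fastforce
  have "x = y" if "x \<in> new" "y \<in> new" for x y
    using newly_met_across_unique[of t x k y] Suc.prems that unfolding new_def by simp
  then have "card new \<le> 1"
    using fin by (simp add: card_le_Suc0_iff_eq new_def)
  moreover have "card (met_across k (Suc t)) \<le> card (met_across k t \<union> new)"
    using fin by (intro card_mono) (auto simp: new_def)
  ultimately show ?case
    using Suc card_Un_le[of "met_across k t" new] by simp
qed

lemma edge_adjacent_sometime:
  assumes "{v, w} \<in> E"
  shows "\<exists>t\<le>length Ls. adjacent_at (config \<pi>0 Ls t) v w"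
proof -
  obtain t I where "(t, I) \<in> set Is" "{v, w} \<in> I"
    using net assms unfolding swap_network_def by blast
  then have "t \<le> length Ls" "interaction_layer E (config \<pi>0 Ls t) I"
    using net unfolding swap_network_def by fast+
  with \<open>{v, w} \<in> I\<close> show ?thesis
    unfolding interaction_layer_def adjacent_at_def by (fastforce simp: doubleton_eq_iff)
qed

lemma card_cut_boundary_le:
  assumes "finite V"
  shows "card (cut_boundary V E \<pi>0 k) \<le> Suc (length Ls)"
proof -
  have "cut_boundary V E \<pi>0 k \<subseteq> met_across k (length Ls)"
    using edge_adjacent_sometime unfolding cut_boundary_def met_across_def by blast
  moreover have "finite (met_across k (length Ls))"
    by (rule finite_subset[OF met_across_subset]) (use assms in simp)
  ultimately have "card (cut_boundary V E \<pi>0 k) \<le> card (met_across k (length Ls))"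
    by (rule card_mono[rotated])
  also have "\<dots> \<le> Suc (length Ls)"
    using card_met_across_le assms by blast
  finally show ?thesis .
qed

lemma card_edges_at_vertex_le:
  assumes "F \<subseteq> E" "finite F" "\<forall>e\<in>F. x \<in> e"
  shows "card F \<le> length Is"
proof -
  have "\<forall>e\<in>F. \<exists>i. i < length Is \<and> e \<in> snd (Is ! i)"
  proof
    fix e assume "e \<in> F"
    obtain t I where "(t, I) \<in> set Is" "e \<in> I"
      using net assms \<open>e \<in> F\<close> unfolding swap_network_def by blast
    moreover obtain i where "i < length Is" "Is ! i = (t, I)"
      using calculation(1) by (meson in_set_conv_nth)
    ultimately show "\<exists>i. i < length Is \<and> e \<in> snd (Is ! i)"
      by auto
  qed
  then obtain g where g: "\<forall>e\<in>F. g e < length Is \<and> e \<in> snd (Is ! g e)"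
    by (auto dest: bchoice)
  have "inj_on g F"
  proof (rule inj_onI, rule ccontr)
    fix e e' assume "e \<in> F" "e' \<in> F" "g e = g e'" "e \<noteq> e'"
    obtain t I where tI: "Is ! g e = (t, I)"
      by fastforce
    then have "(t, I) \<in> set Is"
      using g \<open>e \<in> F\<close> by (metis nth_mem)
    then have "interaction_layer E (config \<pi>0 Ls t) I"
      using net unfolding swap_network_def by fast
    moreover have "e \<in> I" "e' \<in> I"
      using g tI \<open>e \<in> F\<close> \<open>e' \<in> F\<close> \<open>g e = g e'\<close> by auto
    ultimately have "e \<inter> e' = {}"
      using \<open>e \<noteq> e'\<close> unfolding interaction_layer_def by blast
    then show False
      using assms(3) \<open>e \<in> F\<close> \<open>e' \<in> F\<close> by blast
  qed
  moreover have "g ` F \<subseteq> {..<length Is}"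
    using g by auto
  ultimately show ?thesis
    using card_inj_on_le[of g F "{..<length Is}"] by simp
qed

end

lemma d_swap_eqI:
  assumes "swap_network V E \<pi>0 Ls Is" "length Ls = d"
    and "\<And>\<pi>0 Ls Is. swap_network V E \<pi>0 Ls Is \<Longrightarrow> d \<le> length Ls"
  shows "d_swap V E = d"
  unfolding d_swap_def by (rule Least_equality) (use assms in auto)

lemma min_interaction_depth_eqI:
  assumes "swap_network V E \<pi>0 Ls Is" "length Is = k"
    and "\<And>\<pi>0 Ls Is. swap_network V E \<pi>0 Ls Is \<Longrightarrow> k \<le> length Is"
  shows "min_interaction_depth V E = k"
  unfolding min_interaction_depth_def by (rule Least_equality) (use assms in auto)

lemma grid3_V_iff [simp]: "(a, m, n) \<in> grid3_V A M N \<longleftrightarrow> a < A \<and> m < M \<and> n < N"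
  unfolding grid3_V_def by auto

lemma grid3_V_eq: "grid3_V A M N = {0..<A} \<times> {0..<M} \<times> {0..<N}"
  unfolding grid3_V_def by auto

lemma finite_grid3_V [simp]: "finite (grid3_V A M N)"
  unfolding grid3_V_eq by simp

lemma card_grid3_V: "card (grid3_V A M N) = A * M * N"
  unfolding grid3_V_eq by (simp add: card_cartesian_product)

lemma grid3_edge_a: "Suc a < A \<Longrightarrow> m < M \<Longrightarrow> n < N \<Longrightarrow> {(a, m, n), (Suc a, m, n)} \<in> grid3_E A M N"
  unfolding grid3_E_def by (intro UnI1 CollectI exI[of _ a] exI[of _ m] exI[of _ n]) simp

lemma grid3_edge_n: "a < A \<Longrightarrow> m < M \<Longrightarrow> Suc n < N \<Longrightarrow> {(a, m, n), (a, m, Suc n)} \<in> grid3_E A M N"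
  unfolding grid3_E_def by (intro UnI2 CollectI exI[of _ a] exI[of _ m] exI[of _ n]) simp

lemma grid3_E_cases:
  assumes "e \<in> grid3_E A M N"
  obtains a m n where "e = {(a, m, n), (Suc a, m, n)}" "Suc a < A" "m < M" "n < N"
    | a m n where "e = {(a, m, n), (a, Suc m, n)}" "a < A" "Suc m < M" "n < N"
    | a m n where "e = {(a, m, n), (a, m, Suc n)}" "a < A" "m < M" "Suc n < N"
  using assms unfolding grid3_E_def by auto

lemma grid3_E_subset: "\<forall>e\<in>grid3_E A M N. e \<subseteq> grid3_V A M N"
  unfolding grid3_E_def grid3_V_def by auto

lemma grid3_E_transpose:
  "{(a, n, m), (a', n', m')} \<in> grid3_E A N M \<longleftrightarrow> {(a, m, n), (a', m', n')} \<in> grid3_E A M N"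
  unfolding grid3_E_def by (simp add: doubleton_eq_iff) blast

lemma grid2_V_iff [simp]: "(m, n) \<in> grid2_V M N \<longleftrightarrow> m < M \<and> n < N"
  unfolding grid2_V_def by auto

lemma grid2_V_eq: "grid2_V M N = {0..<M} \<times> {0..<N}"
  unfolding grid2_V_def by auto

lemma finite_grid2_V [simp]: "finite (grid2_V M N)"
  unfolding grid2_V_eq by simp

lemma card_grid2_V: "card (grid2_V M N) = M * N"
  unfolding grid2_V_eq by (simp add: card_cartesian_product)

lemma grid2_edge_m: "Suc m < M \<Longrightarrow> n < N \<Longrightarrow> {(m, n), (Suc m, n)} \<in> grid2_E M N"
  unfolding grid2_E_def by (intro UnI1 CollectI exI[of _ m] exI[of _ n]) simp

lemma grid2_edge_n: "m < M \<Longrightarrow> Suc n < N \<Longrightarrow> {(m, n), (m, Suc n)} \<in> grid2_E M N"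
  unfolding grid2_E_def by (intro UnI2 CollectI exI[of _ m] exI[of _ n]) simp

lemma grid2_E_cases:
  assumes "e \<in> grid2_E M N"
  obtains m n where "e = {(m, n), (Suc m, n)}" "Suc m < M" "n < N"
    | m n where "e = {(m, n), (m, Suc n)}" "m < M" "Suc n < N"
  using assms unfolding grid2_E_def by auto

lemma grid2_E_subset: "\<forall>e\<in>grid2_E M N. e \<subseteq> grid2_V M N"
  unfolding grid2_E_def grid2_V_def by auto

lemma grid3_E_single_layer:
  "{(0, m, n), (0, m', n')} \<in> grid3_E 1 M N \<longleftrightarrow> {(m, n), (m', n')} \<in> grid2_E M N"
  unfolding grid3_E_def grid2_E_def by (simp add: doubleton_eq_iff)

lemma card_cut_boundary_iso:
  assumes "bij_betw \<phi> V V'" and "\<And>v w. v \<in> V \<Longrightarrow> w \<in> V \<Longrightarrow> {\<phi> v, \<phi> w} \<in> E' \<longleftrightarrow> {v, w} \<in> E"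
  shows "card (cut_boundary V' E' f k) = card (cut_boundary V E (f \<circ> \<phi>) k)"
proof -
  have "cut_boundary V' E' f k = \<phi> ` cut_boundary V E (f \<circ> \<phi>) k"
    using assms unfolding cut_boundary_def bij_betw_def by auto
  moreover have "inj_on \<phi> (cut_boundary V E (f \<circ> \<phi>) k)"
    using assms(1) unfolding bij_betw_def cut_boundary_def by (blast intro: inj_on_subset)
  ultimately show ?thesis
    by (simp add: card_image)
qed

lemma path_meets_cut_boundary:
  assumes "\<And>i. Suc i < L \<Longrightarrow> {g i, g (Suc i)} \<in> E" and "\<And>i. i < L \<Longrightarrow> g i \<in> V"
    and "a < L" "b < L" "f (g a) < k" "\<not> f (g b) < k"
  shows "\<exists>i<L. g i \<in> cut_boundary V E f k"
proof (rule ccontr)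
  assume none: "\<not> ?thesis"
  have "f (g i) < k \<longleftrightarrow> f (g (Suc i)) < k" if "Suc i < L" for i
  proof -
    have "{g (Suc i), g i} \<in> E"
      using assms(1)[OF that] by (simp add: insert_commute)
    then show ?thesis
      using none assms(1,2) that unfolding cut_boundary_def
      by (metis (no_types, lifting) Suc_lessD lessI mem_Collect_eq)
  qed
  then have "f (g i) < k \<longleftrightarrow> f (g 0) < k" if "i < L" for i
    using that by (induction i) auto
  then show False
    using assms(3-6) by blast
qed

lemma card_cut_boundary_grid3_transpose:
  "card (cut_boundary (grid3_V A N M) (grid3_E A N M) (\<lambda>(a, n, m). f (a, m, n)) k) =
   card (cut_boundary (grid3_V A M N) (grid3_E A M N) f k)"
proof -
  have "bij_betw (\<lambda>(a, n, m). (a, m, n)) (grid3_V A N M) (grid3_V A M N)"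
    by (rule bij_betw_byWitness[where f' = "\<lambda>(a, m, n). (a, n, m)"]) auto
  then have "card (cut_boundary (grid3_V A M N) (grid3_E A M N) f k) =
    card (cut_boundary (grid3_V A N M) (grid3_E A N M) (f \<circ> (\<lambda>(a, n, m). (a, m, n))) k)"
    by (rule card_cut_boundary_iso) (auto simp: grid3_E_transpose)
  moreover have "f \<circ> (\<lambda>(a, n, m). (a, m, n)) = (\<lambda>(a, n, m). f (a, m, n))"
    by auto
  ultimately show ?thesis
    by simp
qed

abbreviation grid3_cut ::
  "nat \<Rightarrow> nat \<Rightarrow> nat \<Rightarrow> (nat \<times> nat \<times> nat \<Rightarrow> nat) \<Rightarrow> nat \<Rightarrow> (nat \<times> nat \<times> nat) set" where
  "grid3_cut A M N f k \<equiv> cut_boundary (grid3_V A M N) (grid3_E A M N) f k"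

text \<open>A row of layer \<open>a\<close> lying entirely below the cut meets it through a rung to the other
  layer, which exists because \<open>A \<le> 2\<close>.\<close>

lemma row_meets_grid3_cut:
  assumes "A \<le> 2" "m < M" "a < A" "\<forall>a<A. \<exists>n<N. f (a, m, n) < k"
    and "a' < A" "n' < N" "\<not> f (a', m, n') < k"
  shows "\<exists>n<N. (a, m, n) \<in> grid3_cut A M N f k"
proof (cases "\<exists>n<N. \<not> f (a, m, n) < k")
  case True
  then obtain n1 n2 where "n1 < N" "f (a, m, n1) < k" "n2 < N" "\<not> f (a, m, n2) < k"
    using assms(3,4) by blast
  then show ?thesis
    using assms(2,3)
    by (intro path_meets_cut_boundary[where g = "\<lambda>n. (a, m, n)"]) (auto intro: grid3_edge_n)
next
  case False
  then have "f (a, m, n') < k"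
    using assms(6) by blast
  then have "a \<noteq> a'"
    using assms(7) by blast
  then have "a = 0 \<and> a' = 1 \<or> a = 1 \<and> a' = 0"
    using assms(1,3,5) by arith
  then have "{(a, m, n'), (a', m, n')} \<in> grid3_E A M N"
    using grid3_edge_a[of 0 A m M n' N] assms(1-6) by (auto simp: insert_commute)
  then have "(a, m, n') \<in> grid3_cut A M N f k"
    using \<open>f (a, m, n') < k\<close> assms(2,3,5,6,7) unfolding cut_boundary_def by auto
  then show ?thesis
    using assms(6) by blast
qed

lemma card_grid3_cut_ge_rows:
  assumes "A \<le> 2"
    and "\<forall>m<M. (\<forall>a<A. \<exists>n<N. f (a, m, n) < k) \<and> (\<exists>a<A. \<exists>n<N. \<not> f (a, m, n) < k)"
  shows "A * M \<le> card (grid3_cut A M N f k)"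
proof -
  let ?B = "grid3_cut A M N f k"
  have "{0..<A} \<times> {0..<M} \<subseteq> (\<lambda>(a, m, n). (a, m)) ` ?B"
  proof clarsimp
    fix a m assume "a < A" "m < M"
    moreover obtain a' n' where "a' < A" "n' < N" "\<not> f (a', m, n') < k"
      using assms(2) \<open>m < M\<close> by blast
    ultimately obtain n where "(a, m, n) \<in> ?B"
      using row_meets_grid3_cut[OF assms(1)] assms(2) by blast
    then show "(a, m) \<in> (\<lambda>(a, m, n). (a, m)) ` ?B"
      by force
  qed
  then have "card ({0..<A} \<times> {0..<M}) \<le> card ((\<lambda>(a, m, n). (a, m)) ` ?B)"
    by (rule card_mono[rotated]) (simp add: cut_boundary_def)
  also have "\<dots> \<le> card ?B"
    by (rule card_image_le) (simp add: cut_boundary_def)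
  finally show ?thesis
    by (simp add: card_cartesian_product)
qed

lemma card_grid3_cut_ge_full_column:
  assumes "A \<le> 2" "n1 < N" "\<forall>a<A. \<forall>m<M. f (a, m, n1) < k"
    and "\<forall>m<M. \<exists>a<A. \<exists>n<N. \<not> f (a, m, n) < k"
  shows "A * M \<le> card (grid3_cut A M N f k)"
  using assms by (intro card_grid3_cut_ge_rows) blast+

lemma grid3_cross_position:
  assumes "inj_on f (grid3_V A M N)"
    and "m1 < M" "\<forall>a<A. \<forall>n<N. f (a, m1, n) < Suc k" "\<exists>a<A. \<exists>n<N. \<not> f (a, m1, n) < k"
    and "n1 < N" "\<forall>a<A. \<forall>m<M. f (a, m, n1) < Suc k" "\<exists>a<A. \<exists>m<M. \<not> f (a, m, n1) < k"
  shows "\<exists>a0<A. f (a0, m1, n1) = k"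
proof -
  obtain a0 m0 where a0: "a0 < A" "m0 < M" "\<not> f (a0, m0, n1) < k"
    using assms(7) by blast
  moreover have "f (a0, m0, n1) < Suc k"
    using assms(6) a0 by blast
  ultimately have "f (a0, m0, n1) = k"
    by simp
  obtain a2 n2 where a2: "a2 < A" "n2 < N" "\<not> f (a2, m1, n2) < k"
    using assms(4) by blast
  moreover have "f (a2, m1, n2) < Suc k"
    using assms(3) a2 by blast
  ultimately have "f (a2, m1, n2) = k"
    by simp
  have "(a0, m0, n1) = (a2, m1, n2)"
    by (rule inj_onD[OF assms(1)])
      (use a0 a2 assms(2,5) \<open>f (a0, m0, n1) = k\<close> \<open>f (a2, m1, n2) = k\<close> in simp_all)
  with a0 \<open>f (a0, m0, n1) = k\<close> show ?thesis
    by auto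
qed

lemma card_grid3_cut_ge_full_cross:
  assumes "A \<le> 2" "2 \<le> N" "inj_on f (grid3_V A M N)"
    and "m1 < M" "\<forall>a<A. \<forall>n<N. f (a, m1, n) < Suc k"
    and "n1 < N" "\<forall>a<A. \<forall>m<M. f (a, m, n1) < Suc k"
    and "\<forall>m<M. \<exists>a<A. \<exists>n<N. \<not> f (a, m, n) < k"
    and "\<exists>a<A. \<exists>m<M. \<not> f (a, m, n1) < k"
  shows "A * M \<le> card (grid3_cut A M N f k)"
proof (rule card_grid3_cut_ge_rows[OF assms(1)], intro allI impI conjI)
  have "\<exists>a<A. \<exists>n<N. \<not> f (a, m1, n) < k"
    using assms(4,8) by blast
  then obtain a0 where a0: "a0 < A" "f (a0, m1, n1) = k"
    using grid3_cross_position[OF assms(3-5) _ assms(6,7,9)] by blast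
  fix m a assume "m < M" "a < A"
  show "\<exists>n<N. f (a, m, n) < k"
  proof (cases "a = a0 \<and> m = m1")
    case True
    define n' where "n' = (if n1 = 0 then 1 else 0 :: nat)"
    have "n' < N" "n' \<noteq> n1"
      using assms(2) unfolding n'_def by auto
    then have "f (a, m, n') \<noteq> k"
      using True inj_onD[OF assms(3), of "(a, m, n')" "(a0, m1, n1)"] a0 assms(4,6) by auto
    moreover have "f (a, m, n') < Suc k"
      using True \<open>n' < N\<close> \<open>a < A\<close> assms(5) by simp
    ultimately show ?thesis
      using \<open>n' < N\<close> by (auto simp: less_Suc_eq)
  next
    case False
    then have "f (a, m, n1) \<noteq> k"
      using inj_onD[OF assms(3), of "(a, m, n1)" "(a0, m1, n1)"] a0 assms(4,6) \<open>m < M\<close> \<open>a < A\<close>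
      by auto
    moreover have "f (a, m, n1) < Suc k"
      using \<open>m < M\<close> \<open>a < A\<close> assms(7) by simp
    ultimately show ?thesis
      using assms(6) by (auto simp: less_Suc_eq)
  qed
next
  fix m assume "m < M"
  then show "\<exists>a<A. \<exists>n<N. \<not> f (a, m, n) < k"
    using assms(8) by blast
qed

lemma card_grid3_cut_ge_full_row:
  assumes "A \<le> 2" "M \<le> N" "m1 < M" "\<forall>a<A. \<forall>n<N. f (a, m1, n) < k"
    and "\<forall>n<N. \<exists>a<A. \<exists>m<M. \<not> f (a, m, n) < k"
  shows "A * M \<le> card (grid3_cut A M N f k)"
proof -
  let ?g = "\<lambda>(a, n, m). f (a, m, n)"
  have "A * M \<le> A * N"
    using assms(2) by (rule mult_le_mono2)
  also have "\<dots> \<le> card (grid3_cut A N M ?g k)"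
    using assms by (intro card_grid3_cut_ge_full_column) auto
  also have "\<dots> = card (grid3_cut A M N f k)"
    by (rule card_cut_boundary_grid3_transpose)
  finally show ?thesis .
qed

text \<open>Take the least \<open>k\<close> for which some row or some column lies entirely below the cut. If only
  columns do, every row crosses the cut; if only rows do, every column does; if both do, one step
  earlier neither does, and every row crosses the cut at \<open>k - 1\<close>.\<close>

theorem grid3_cut_large:
  assumes "1 \<le> A" "A \<le> 2" "2 \<le> M" "M \<le> N" "bij_betw f (grid3_V A M N) {0..<A * M * N}"
  shows "\<exists>k. A * M \<le> card (grid3_cut A M N f k)"
proof -
  define row_below where "row_below k m \<longleftrightarrow> (\<forall>a<A. \<forall>n<N. f (a, m, n) < k)" for k m
  define col_below where "col_below k n \<longleftrightarrow> (\<forall>a<A. \<forall>m<M. f (a, m, n) < k)" for k n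
  define Q where "Q k \<longleftrightarrow> (\<exists>m<M. row_below k m) \<or> (\<exists>n<N. col_below k n)" for k
  have "row_below (A * M * N) 0"
    using assms(3,5) unfolding row_below_def bij_betw_def by fastforce
  then have "Q (A * M * N)"
    using assms(3) unfolding Q_def by auto
  moreover have "\<not> Q 0"
    using assms(1,3,4) unfolding Q_def row_below_def col_below_def by (auto intro!: exI[of _ 0])
  ultimately obtain k where "\<not> Q k" "Q (Suc k)"
    using ex_least_nat_less[of Q] by blast
  show ?thesis
  proof (cases "\<exists>m<M. row_below (Suc k) m")
    case False
    then have "\<forall>m<M. \<exists>a<A. \<exists>n<N. \<not> f (a, m, n) < Suc k"
      unfolding row_below_def by blast
    moreover obtain n1 where "n1 < N" "col_below (Suc k) n1"
      using False \<open>Q (Suc k)\<close> unfolding Q_def by blast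
    ultimately show ?thesis
      using card_grid3_cut_ge_full_column[OF assms(2) \<open>n1 < N\<close>] unfolding col_below_def by blast
  next
    case True
    then obtain m1 where "m1 < M" "row_below (Suc k) m1"
      by blast
    show ?thesis
    proof (cases "\<exists>n<N. col_below (Suc k) n")
      case False
      then have "\<forall>n<N. \<exists>a<A. \<exists>m<M. \<not> f (a, m, n) < Suc k"
        unfolding col_below_def by blast
      then show ?thesis
        using card_grid3_cut_ge_full_row[OF assms(2,4) \<open>m1 < M\<close>] \<open>row_below (Suc k) m1\<close>
        unfolding row_below_def by blast
    next
      case True
      then obtain n1 where "n1 < N" "col_below (Suc k) n1"
        by blast
      have "\<forall>m<M. \<exists>a<A. \<exists>n<N. \<not> f (a, m, n) < k"
        using \<open>\<not> Q k\<close> unfolding Q_def row_below_def by blast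
      moreover have "\<exists>a<A. \<exists>m<M. \<not> f (a, m, n1) < k"
        using \<open>\<not> Q k\<close> \<open>n1 < N\<close> unfolding Q_def col_below_def by blast
      moreover have "inj_on f (grid3_V A M N)" "2 \<le> N"
        using assms(3-5) bij_betw_imp_inj_on by auto
      ultimately show ?thesis
        using card_grid3_cut_ge_full_cross[OF assms(2) _ _ \<open>m1 < M\<close> _ \<open>n1 < N\<close>]
          \<open>row_below (Suc k) m1\<close> \<open>col_below (Suc k) n1\<close>
        unfolding row_below_def col_below_def by blast
    qed
  qed
qed

theorem grid2_cut_large:
  assumes "2 \<le> M" "M \<le> N" "bij_betw f (grid2_V M N) {0..<M * N}"
  shows "\<exists>k. M \<le> card (cut_boundary (grid2_V M N) (grid2_E M N) f k)"
proof -
  let ?g = "\<lambda>v :: nat \<times> nat \<times> nat. f (snd v)"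
  have layer: "bij_betw (\<lambda>(m, n). (0, m, n)) (grid2_V M N) (grid3_V 1 M N)"
    by (rule bij_betw_byWitness[where f' = "\<lambda>(a, m, n). (m, n)"]) auto
  have "bij_betw snd (grid3_V 1 M N) (grid2_V M N)"
    by (rule bij_betw_byWitness[where f' = "\<lambda>(m, n). (0, m, n)"]) auto
  then have "bij_betw (f \<circ> snd) (grid3_V 1 M N) {0..<M * N}"
    using assms(3) by (rule bij_betw_trans)
  then have "bij_betw ?g (grid3_V 1 M N) {0..<1 * M * N}"
    by (simp add: comp_def)
  then obtain k where "1 * M \<le> card (grid3_cut 1 M N ?g k)"
    using grid3_cut_large[of 1 M N ?g] assms(1,2) by auto
  moreover have "card (grid3_cut 1 M N ?g k) =
    card (cut_boundary (grid2_V M N) (grid2_E M N) (?g \<circ> (\<lambda>(m, n). (0, m, n))) k)"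
    by (rule card_cut_boundary_iso[OF layer]) (clarsimp simp: grid3_E_single_layer[simplified])
  moreover have "?g \<circ> (\<lambda>(m, n). (0, m, n)) = f"
    by auto
  ultimately show ?thesis
    by auto
qed

lemma swap_depth_ge_grid2:
  assumes "swap_network (grid2_V M N) (grid2_E M N) \<pi>0 Ls Is" "M \<le> N"
  shows "M - 1 \<le> length Ls"
proof (cases "M \<le> 1")
  case False
  have "bij_betw \<pi>0 (grid2_V M N) {0..<M * N}"
    using assms(1) unfolding swap_network_def card_grid2_V by blast
  then obtain k where "M \<le> card (cut_boundary (grid2_V M N) (grid2_E M N) \<pi>0 k)"
    using grid2_cut_large False assms(2) by fastforce
  moreover have "card (cut_boundary (grid2_V M N) (grid2_E M N) \<pi>0 k) \<le> Suc (length Ls)"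
    by (rule card_cut_boundary_le[OF assms(1)]) simp
  ultimately show ?thesis
    by linarith
qed simp

lemma swap_depth_ge_grid3_spin:
  assumes "swap_network (grid3_V 2 M N) (grid3_E 2 M N) \<pi>0 Ls Is" "2 \<le> M" "M \<le> N"
  shows "2 * M - 1 \<le> length Ls"
proof -
  have "bij_betw \<pi>0 (grid3_V 2 M N) {0..<2 * M * N}"
    using assms(1) unfolding swap_network_def card_grid3_V by blast
  then obtain k where "2 * M \<le> card (grid3_cut 2 M N \<pi>0 k)"
    using grid3_cut_large assms(2,3) by fastforce
  moreover have "card (grid3_cut 2 M N \<pi>0 k) \<le> Suc (length Ls)"
    by (rule card_cut_boundary_le[OF assms(1)]) simp
  ultimately show ?thesis
    by linarith
qed

section \<open>Brick-wall swap networks\<close>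

text \<open>Layer \<open>t\<close> of the brick wall swaps the pairs \<open>i, i + 1\<close> with \<open>i + t + h\<close> even, and the
  start configuration is chosen so that the configuration at time \<open>h\<close> is \<open>mid\<close>. From there,
  running forward moves the elements at even positions of \<open>mid\<close> to the right and those at odd
  positions to the left; running backward does the opposite.\<close>

definition brick :: "nat \<Rightarrow> nat \<Rightarrow> nat set" where
  "brick n c = {i. i + 1 < n \<and> even (i + c)}"

definition brick_layers :: "nat \<Rightarrow> nat \<Rightarrow> nat \<Rightarrow> nat set list" where
  "brick_layers n h d = map (\<lambda>t. brick n (t + h)) [0..<d]"

definition brick_start :: "nat \<Rightarrow> nat \<Rightarrow> nat \<Rightarrow> ('v \<Rightarrow> nat) \<Rightarrow> 'v \<Rightarrow> nat" where
  "brick_start n h d mid = foldl (\<lambda>\<pi> L. swap_pos L \<circ> \<pi>) mid (rev (take h (brick_layers n h d)))"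

abbreviation brick_config :: "nat \<Rightarrow> nat \<Rightarrow> nat \<Rightarrow> ('v \<Rightarrow> nat) \<Rightarrow> nat \<Rightarrow> 'v \<Rightarrow> nat" where
  "brick_config n h d mid \<equiv> config (brick_start n h d mid) (brick_layers n h d)"

lemma swap_layer_brick_layers: "\<forall>L\<in>set (brick_layers n h d). swap_layer n L"
  unfolding brick_layers_def brick_def swap_layer_def by auto

lemma length_brick_layers [simp]: "length (brick_layers n h d) = d"
  unfolding brick_layers_def by simp

lemma nth_brick_layers: "t < d \<Longrightarrow> brick_layers n h d ! t = brick n (t + h)"
  unfolding brick_layers_def by simp

lemma swap_pos_brick:
  "swap_pos (brick n c) p =
    (if p + 1 < n \<and> even (p + c) then p + 1 else if 0 < p \<and> p < n \<and> odd (p + c) then p - 1 else p)"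
proof -
  have "0 < p \<Longrightarrow> (p - 1 + 1 < n \<and> even (p - 1 + c)) = (p < n \<and> odd (p + c))"
    by (cases p) auto
  then show ?thesis
    unfolding swap_pos_def brick_def by auto
qed

lemma bij_betw_brick_start:
  "bij_betw mid V {0..<n} \<Longrightarrow> bij_betw (brick_start n h d mid) V {0..<n}"
  unfolding brick_start_def
  using swap_layer_brick_layers[of n h d] set_take_subset[of h "brick_layers n h d"]
  by (intro bij_betw_foldl_swap_pos) auto

lemma inj_on_brick_config:
  "bij_betw mid V {0..<n} \<Longrightarrow> inj_on (brick_config n h d mid t) V"
  using bij_betw_config[OF swap_layer_brick_layers bij_betw_brick_start] bij_betw_imp_inj_on
  by blast

lemma brick_config_mid: "h \<le> d \<Longrightarrow> brick_config n h d mid h = mid"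
  unfolding config_def brick_start_def
  using swap_layer_brick_layers[of n h d] set_take_subset[of h "brick_layers n h d"]
  by (intro foldl_swap_pos_rev) auto

lemma brick_config_forward:
  assumes "h \<le> d" "mid x = p" "mid y = p + 2 * k + 1" "even p" "p + 2 * k + 1 < n"
  shows "s \<le> k \<Longrightarrow> h + s \<le> d \<Longrightarrow>
    brick_config n h d mid (h + s) x = p + s \<and> brick_config n h d mid (h + s) y = p + 2 * k + 1 - s"
proof (induction s)
  case 0
  then show ?case
    using brick_config_mid[OF assms(1), of n mid] assms(2,3) by simp
next
  case (Suc s)
  let ?c = "brick_config n h d mid"
  have IH: "?c (h + s) x = p + s" "?c (h + s) y = p + 2 * k + 1 - s"
    using Suc by auto
  have layer: "brick_layers n h d ! (h + s) = brick n (h + s + h)"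
    using Suc.prems by (simp add: nth_brick_layers)
  have "even (p + s + (h + s + h))" "odd (p + 2 * k + 1 - s + (h + s + h))"
    using assms(4) Suc.prems by presburger+
  then show ?case
    using IH layer Suc.prems assms(5)
    by (simp add: config_Suc swap_pos_brick)
qed

lemma brick_config_backward:
  assumes "h \<le> d" "mid x = p" "mid y = p + 2 * k + 1" "odd p" "p + 2 * k + 1 < n"
  shows "s \<le> k \<Longrightarrow> s \<le> h \<Longrightarrow>
    brick_config n h d mid (h - s) x = p + s \<and> brick_config n h d mid (h - s) y = p + 2 * k + 1 - s"
proof (induction s)
  case 0
  then show ?case
    using brick_config_mid[OF assms(1), of n mid] assms(2,3) by simp
next
  case (Suc s)
  let ?c = "brick_config n h d mid"
  define t where "t = h - Suc s"
  have t: "Suc t = h - s" "t < d"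
    using Suc.prems assms(1) unfolding t_def by auto
  have IH: "?c (Suc t) x = p + s" "?c (Suc t) y = p + 2 * k + 1 - s"
    using Suc t by auto
  have layer: "brick_layers n h d ! t = brick n (t + h)"
    using t by (simp add: nth_brick_layers)
  have "t + h + s + 1 = 2 * h"
    using Suc.prems unfolding t_def by simp
  then have par: "even (p + s + (t + h))" "odd (p + 2 * k + 1 - s + (t + h))"
    using assms(4) Suc.prems(1) by presburger+
  have "t < length (brick_layers n h d)"
    using t by simp
  note step = config_Suc_back[OF this swap_layer_brick_layers, unfolded layer]
  have "?c t x = p + Suc s"
    using step[of "brick_start n h d mid" x] IH par(1) Suc.prems assms(5)
    by (simp add: swap_pos_brick)
  moreover have "?c t y = p + 2 * k + 1 - Suc s"
    using step[of "brick_start n h d mid" y] IH par(2) Suc.prems assms(5)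
    by (simp add: swap_pos_brick)
  ultimately show ?case
    unfolding t_def by simp
qed

lemma brick_config_forward_passed:
  assumes "h + k + 1 \<le> d" "mid x = p" "mid y = p + 2 * k + 1" "even p" "p + 2 * k + 1 < n"
  shows "brick_config n h d mid (h + k + 1) y + 1 = brick_config n h d mid (h + k + 1) x"
    and "brick_config n h d mid (h + k + 1) y = p + k"
proof -
  let ?c = "brick_config n h d mid"
  have met: "?c (h + k) x = p + k" "?c (h + k) y = p + k + 1"
    using brick_config_forward[of h d mid x p y k n k] assms by auto
  have layer: "brick_layers n h d ! (h + k) = brick n (h + k + h)"
    using assms(1) by (simp add: nth_brick_layers)
  have par: "even (p + k + (h + k + h))"
    using assms(4) by presburger
  have "?c (h + k + 1) x = swap_pos (brick n (h + k + h)) (p + k)"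
    using config_Suc[of "h + k" "brick_layers n h d" _ x] met layer assms(1) by simp
  also have "\<dots> = p + k + 1"
    using par assms(5) by (simp add: swap_pos_brick)
  finally have "?c (h + k + 1) x = p + k + 1" .
  have "?c (h + k + 1) y = swap_pos (brick n (h + k + h)) (p + k + 1)"
    using config_Suc[of "h + k" "brick_layers n h d" _ y] met layer assms(1) by simp
  also have "\<dots> = p + k"
    using par assms(5) by (simp add: swap_pos_brick)
  finally have "?c (h + k + 1) y = p + k" .
  with \<open>?c (h + k + 1) x = p + k + 1\<close>
  show "?c (h + k + 1) y + 1 = ?c (h + k + 1) x" "?c (h + k + 1) y = p + k"
    by simp_all
qed

definition parity_layer :: "'v set set \<Rightarrow> ('v \<Rightarrow> nat) \<Rightarrow> nat \<Rightarrow> ('v \<Rightarrow> bool) \<Rightarrow> 'v set set" where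
  "parity_layer E c r P =
     {e \<in> E. \<exists>v w. e = {v, w} \<and> P v \<and> P w \<and> c v + 1 = c w \<and> even (c v + r)}"

lemma parity_layerI:
  "{v, w} \<in> E \<Longrightarrow> P v \<Longrightarrow> P w \<Longrightarrow> c v + 1 = c w \<Longrightarrow> even (c v + r) \<Longrightarrow>
   {v, w} \<in> parity_layer E c r P"
  unfolding parity_layer_def by blast

lemma parity_layerI':
  "{v, w} \<in> E \<Longrightarrow> P v \<Longrightarrow> P w \<Longrightarrow> c w + 1 = c v \<Longrightarrow> even (c w + r) \<Longrightarrow>
   {v, w} \<in> parity_layer E c r P"
  using parity_layerI[of w v E P c r] by (simp add: insert_commute)

text \<open>Two edges of one parity layer that share a vertex coincide: a shared left end (or right end)
  forces equal pairs by injectivity, and a right end shared with a left end violates parity.\<close>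

lemma parity_layer_edges_disjoint:
  assumes "inj_on c V" "\<forall>e\<in>E. e \<subseteq> V"
    and "e \<in> parity_layer E c r P" "e' \<in> parity_layer E c r P" "z \<in> e" "z \<in> e'"
  shows "e = e'"
proof -
  obtain v w where vw: "e = {v, w}" "c v + 1 = c w" "even (c v + r)" "e \<in> E"
    using assms(3) unfolding parity_layer_def by blast
  obtain v' w' where vw': "e' = {v', w'}" "c v' + 1 = c w'" "even (c v' + r)" "e' \<in> E"
    using assms(4) unfolding parity_layer_def by blast
  have V: "v \<in> V" "w \<in> V" "v' \<in> V" "w' \<in> V"
    using assms(2) vw vw' by auto
  have "z = v \<or> z = w" "z = v' \<or> z = w'"
    using assms(5,6) vw(1) vw'(1) by auto
  moreover have "c v \<noteq> c v' + 1" "c v' \<noteq> c v + 1"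
    using vw(3) vw'(3) by presburger+
  ultimately have "v = v' \<and> w = w'"
    using inj_onD[OF assms(1)] V vw(2) vw'(2) by (metis add_right_cancel)
  then show ?thesis
    using vw(1) vw'(1) by simp
qed

lemma interaction_layer_parity_layers:
  assumes "inj_on c V" "\<forall>e\<in>E. e \<subseteq> V" "\<forall>v. \<not> (P1 v \<and> P2 v)"
  shows "interaction_layer E c (parity_layer E c r1 P1 \<union> parity_layer E c r2 P2)"
proof -
  have sides: "\<forall>z\<in>e. P z" if "e \<in> parity_layer E c r P" for e r P
    using that unfolding parity_layer_def by blast
  show ?thesis
    unfolding interaction_layer_def
  proof (intro conjI ballI impI)
    fix e e' assume "e \<in> parity_layer E c r1 P1 \<union> parity_layer E c r2 P2"
      "e' \<in> parity_layer E c r1 P1 \<union> parity_layer E c r2 P2" "e \<noteq> e'"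
    then show "e \<inter> e' = {}"
      using parity_layer_edges_disjoint[OF assms(1,2)] sides assms(3) by blast
  qed (auto simp: parity_layer_def)
qed

lemma interaction_layer_parity_layer:
  assumes "inj_on c V" "\<forall>e\<in>E. e \<subseteq> V"
  shows "interaction_layer E c (parity_layer E c r P)"
  using interaction_layer_parity_layers[OF assms, of P "\<lambda>_. False" r r]
  by (simp add: parity_layer_def)

lemma swap_network_brick:
  assumes "bij_betw mid V {0..<n}" "card V = n"
    and "\<forall>(t, I)\<in>set Is. t \<le> d \<and> interaction_layer E (brick_config n h d mid t) I"
    and "\<forall>e\<in>E. \<exists>(t, I)\<in>set Is. e \<in> I"
  shows "swap_network V E (brick_start n h d mid) (brick_layers n h d) Is"
  unfolding swap_network_def
  using bij_betw_brick_start[OF assms(1)] swap_layer_brick_layers assms by simp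

lemma column_pos_less: "j < K \<Longrightarrow> n < N \<Longrightarrow> n * K + j < K * (N :: nat)"
proof -
  assume "j < K" "n < N"
  then have "n * K + j < Suc n * K"
    by simp
  also have "\<dots> \<le> N * K"
    using \<open>n < N\<close> by (intro mult_right_mono) auto
  finally show ?thesis
    by (simp add: mult.commute)
qed

lemma bij_betw_column_pos:
  assumes "0 < (K :: nat)"
  shows "bij_betw (\<lambda>(j, n). n * K + j) ({0..<K} \<times> {0..<N}) {0..<K * N}"
  by (rule bij_betw_byWitness[where f' = "\<lambda>p. (p mod K, p div K)"])
    (use assms in \<open>auto simp: column_pos_less less_mult_imp_div_less mult.commute\<close>)

text \<open>In the snake layout for columns of even height \<open>2 * h + 2\<close>, every odd column has its
  entries swapped in pairs. Horizontal neighbours then sit at odd distance \<open>2 * h + 1\<close> or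
  \<open>2 * h + 3\<close>, so that the brick wall brings them together.\<close>

definition pair_flip :: "nat \<Rightarrow> nat \<Rightarrow> nat" where
  "pair_flip n j = (if even n then j else if even j then j + 1 else j - 1)"

definition snake_pos :: "nat \<Rightarrow> nat \<Rightarrow> nat \<Rightarrow> nat" where
  "snake_pos h n j = n * (2 * h + 2) + pair_flip n j"

lemma pair_flip_less: "even K \<Longrightarrow> j < K \<Longrightarrow> pair_flip n j < K"
  unfolding pair_flip_def by presburger

lemma pair_flip_pair_flip: "pair_flip n (pair_flip n j) = j"
  unfolding pair_flip_def by (auto elim: oddE)

lemma snake_pos_less: "j < 2 * h + 2 \<Longrightarrow> n < N \<Longrightarrow> snake_pos h n j < (2 * h + 2) * N"
  unfolding snake_pos_def by (intro column_pos_less pair_flip_less) simp_all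

lemma bij_betw_snake_pos:
  "bij_betw (\<lambda>(j, n). snake_pos h n j) ({0..<2 * h + 2} \<times> {0..<N}) {0..<(2 * h + 2) * N}"
proof -
  have "bij_betw (\<lambda>(j, n). (pair_flip n j, n))
    ({0..<2 * h + 2} \<times> {0..<N}) ({0..<2 * h + 2} \<times> {0..<N})"
    by (rule bij_betw_byWitness[where f' = "\<lambda>(j, n). (pair_flip n j, n)"])
      (auto simp: pair_flip_pair_flip intro!: pair_flip_less[where K = "Suc (Suc (2 * h))"])
  then have "bij_betw ((\<lambda>(j, n). n * (2 * h + 2) + j) \<circ> (\<lambda>(j, n). (pair_flip n j, n)))
    ({0..<2 * h + 2} \<times> {0..<N}) {0..<(2 * h + 2) * N}"
    by (rule bij_betw_trans) (rule bij_betw_column_pos, simp)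
  moreover have "(\<lambda>(j, n). n * (2 * h + 2) + j) \<circ> (\<lambda>(j, n). (pair_flip n j, n)) =
    (\<lambda>(j, n). snake_pos h n j)"
    by (auto simp: snake_pos_def)
  ultimately show ?thesis
    by simp
qed

lemma snake_pos_even_col: "even n \<Longrightarrow> snake_pos h n j = n * (2 * h + 2) + j"
  unfolding snake_pos_def pair_flip_def by simp

lemma snake_pos_odd_col_even: "odd n \<Longrightarrow> even j \<Longrightarrow> snake_pos h n j = n * (2 * h + 2) + j + 1"
  unfolding snake_pos_def pair_flip_def by simp

lemma snake_pos_odd_col_odd: "odd n \<Longrightarrow> odd j \<Longrightarrow> snake_pos h n j + 1 = n * (2 * h + 2) + j"
  unfolding snake_pos_def pair_flip_def by (cases j) auto

context
  fixes h N :: nat and mid :: "'v \<Rightarrow> nat" and E :: "'v set set"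
begin

abbreviation snake_config :: "nat \<Rightarrow> 'v \<Rightarrow> nat" where
  "snake_config \<equiv> brick_config ((2 * h + 2) * N) h (2 * h + 1) mid"

lemma snake_horizontal_in_layers:
  assumes "mid x = snake_pos h n j" "mid y = snake_pos h (Suc n) j" "j < 2 * h + 2" "Suc n < N"
    and "{x, y} \<in> E"
  shows "{x, y} \<in> parity_layer E (snake_config 0) (h + 1) (\<lambda>_. True) \<or>
    {x, y} \<in> parity_layer E (snake_config (2 * h + 1)) (h + 1) (\<lambda>_. True)"
proof -
  let ?p = "snake_pos h n j" and ?q = "snake_pos h (Suc n) j"
  have q: "?q < (2 * h + 2) * N"
    using assms(3,4) by (rule snake_pos_less)
  have "even ?p \<and> ?q = ?p + 2 * (h + 1) + 1 \<or> odd ?p \<and> ?q = ?p + 2 * h + 1"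
    unfolding snake_pos_def pair_flip_def
    by (cases "even n"; cases "even j") (auto elim!: oddE simp: algebra_simps)
  then consider "even ?p" "?q = ?p + 2 * (h + 1) + 1" | "odd ?p" "?q = ?p + 2 * h + 1"
    by blast
  then show ?thesis
  proof cases
    case 1
    have t: "h + (h + 1) = 2 * h + 1"
      by simp
    have "snake_config (2 * h + 1) x = ?p + (h + 1)"
      "snake_config (2 * h + 1) y = ?p + (h + 1) + 1"
      using brick_config_forward[of h "2 * h + 1" mid x ?p y "h + 1" _ "h + 1", unfolded t]
        1 assms(1,2) q by simp_all
    then have "{x, y} \<in> parity_layer E (snake_config (2 * h + 1)) (h + 1) (\<lambda>_. True)"
      using 1 assms(5) by (intro parity_layerI) (simp_all add: algebra_simps)
    then show ?thesis ..
  next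
    case 2
    then have "snake_config (h - h) x = ?p + h" "snake_config (h - h) y = ?p + 2 * h + 1 - h"
      using brick_config_backward[of h "2 * h + 1" mid x ?p y h _ h] assms(1,2) q
      by simp_all
    then have "{x, y} \<in> parity_layer E (snake_config 0) (h + 1) (\<lambda>_. True)"
      using 2 assms(5) by (intro parity_layerI) simp_all
    then show ?thesis ..
  qed
qed

lemma snake_vertical_even_in_layer:
  assumes "mid x = snake_pos h n j" "mid y = snake_pos h n (Suc j)" "even j" "{x, y} \<in> E"
  shows "{x, y} \<in> parity_layer E (snake_config h) 0 (\<lambda>_. True)"
proof (cases "even n")
  case True
  then show ?thesis
    using assms by (intro parity_layerI) (simp_all add: brick_config_mid snake_pos_even_col)
next
  case False
  then have "mid x = n * (2 * h + 2) + j + 1" "mid y = n * (2 * h + 2) + j"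
    using assms(1-3) snake_pos_odd_col_odd[of n "Suc j" h]
    by (simp_all add: snake_pos_odd_col_even)
  then show ?thesis
    using assms(3,4) by (intro parity_layerI') (simp_all add: brick_config_mid)
qed

lemma snake_vertical_in_layers:
  fixes col :: "'v \<Rightarrow> nat"
  assumes "mid x = snake_pos h n j" "mid y = snake_pos h n (Suc j)" "Suc j < 2 * h + 2" "n < N"
    and "col x = n" "col y = n" "{x, y} \<in> E"
  shows "{x, y} \<in> parity_layer E (snake_config h) 1 (\<lambda>v. even (col v)) \<union>
      parity_layer E (snake_config h) 0 (\<lambda>v. odd (col v)) \<or>
    {x, y} \<in> parity_layer E (snake_config (h + 1)) 0 (\<lambda>v. even (col v)) \<union>
      parity_layer E (snake_config (h + 1)) 1 (\<lambda>v. odd (col v))"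
proof -
  let ?b = "n * (2 * h + 2)"
  have q: "snake_pos h n (Suc j) < (2 * h + 2) * N"
    using assms(3,4) by (rule snake_pos_less)
  consider "even n" "odd j" | "even n" "even j" | "odd n" "even j" | "odd n" "odd j"
    by blast
  then show ?thesis
  proof cases
    case 1
    then have "{x, y} \<in> parity_layer E (snake_config h) 1 (\<lambda>v. even (col v))"
      using assms by (intro parity_layerI) (simp_all add: brick_config_mid snake_pos_even_col)
    then show ?thesis by blast
  next
    case 2
    then have "snake_config (h + 0 + 1) y + 1 = snake_config (h + 0 + 1) x"
      "snake_config (h + 0 + 1) y = ?b + j + 0"
      using brick_config_forward_passed[of h 0 "2 * h + 1" mid x "?b + j" y] q assms(1,2)
      by (simp_all add: snake_pos_even_col)
    then have "{x, y} \<in> parity_layer E (snake_config (h + 1)) 0 (\<lambda>v. even (col v))"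
      using 2 assms(5-7) by (intro parity_layerI') simp_all
    then show ?thesis by blast
  next
    case 3
    then have "{x, y} \<in> parity_layer E (snake_config h) 0 (\<lambda>v. odd (col v))"
      using assms snake_pos_odd_col_odd[of n "Suc j" h]
      by (intro parity_layerI') (simp_all add: brick_config_mid snake_pos_odd_col_even)
    then show ?thesis by blast
  next
    case 4
    then obtain b where "j = 2 * b + 1"
      by (blast elim: oddE)
    then have i: "j = Suc (2 * b)" "even (2 * b)"
      by simp_all
    define i where "i = 2 * b"
    have "mid x = ?b + i" "mid y = ?b + i + 2 * 1 + 1"
      using 4 i assms(1,2) snake_pos_odd_col_odd[of n j h]
      by (simp_all add: snake_pos_odd_col_even i_def)
    then have "snake_config (h + 1) x = ?b + i + 1"
      "snake_config (h + 1) y = ?b + i + 2 * 1 + 1 - 1"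
      using brick_config_forward[of h "2 * h + 1" mid x "?b + i" y 1 _ 1] q assms(2)
      by (simp_all add: i_def)
    then have "{x, y} \<in> parity_layer E (snake_config (h + 1)) 1 (\<lambda>v. odd (col v))"
      using 4 assms(5-7) by (intro parity_layerI) (simp_all add: i_def)
    then show ?thesis by blast
  qed
qed

lemma snake_vertical_gap_in_layers:
  fixes col :: "'v \<Rightarrow> nat"
  assumes "mid x = snake_pos h n j" "mid y = snake_pos h n (j + 3)" "j + 3 < 2 * h + 2" "even j"
    and "n < N" "col x = n" "col y = n" "{x, y} \<in> E"
  shows "{x, y} \<in> parity_layer E (snake_config (h + 1)) 1 (\<lambda>v. even (col v)) \<or>
    {x, y} \<in> parity_layer E (snake_config h) 1 (\<lambda>v. odd (col v))"
proof (cases "even n")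
  case True
  let ?p = "n * (2 * h + 2) + j"
  have "mid x = ?p" "mid y = ?p + 2 * 1 + 1" "?p + 2 * 1 + 1 < (2 * h + 2) * N"
    using True assms(1-3,5) snake_pos_less[of "j + 3" h n N] by (simp_all add: snake_pos_even_col)
  then have "snake_config (h + 1) x = ?p + 1" "snake_config (h + 1) y = ?p + 2 * 1 + 1 - 1"
    using brick_config_forward[of h "2 * h + 1" mid x ?p y 1 _ 1] True assms(4) by simp_all
  then have "{x, y} \<in> parity_layer E (snake_config (h + 1)) 1 (\<lambda>v. even (col v))"
    using True assms(4,6-8) by (intro parity_layerI) simp_all
  then show ?thesis ..
next
  case False
  then have "mid x = n * (2 * h + 2) + j + 1" "mid y = n * (2 * h + 2) + j + 2"
    using assms(1,2,4) snake_pos_odd_col_odd[of n "j + 3" h]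
    by (simp_all add: snake_pos_odd_col_even)
  then have "{x, y} \<in> parity_layer E (snake_config h) 1 (\<lambda>v. odd (col v))"
    using False assms(4,6-8) by (intro parity_layerI) (simp_all add: brick_config_mid)
  then show ?thesis ..
qed

definition snake_layers :: "('v \<Rightarrow> nat) \<Rightarrow> (nat \<times> 'v set set) list" where
  "snake_layers col =
    [(h, parity_layer E (snake_config h) 1 (\<lambda>v. even (col v)) \<union>
         parity_layer E (snake_config h) 0 (\<lambda>v. odd (col v))),
     (h + 1, parity_layer E (snake_config (h + 1)) 0 (\<lambda>v. even (col v)) \<union>
         parity_layer E (snake_config (h + 1)) 1 (\<lambda>v. odd (col v))),
     (0, parity_layer E (snake_config 0) (h + 1) (\<lambda>_. True)),
     (2 * h + 1, parity_layer E (snake_config (2 * h + 1)) (h + 1) (\<lambda>_. True))]"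

lemma snake_layers_valid:
  assumes "bij_betw mid V {0..<(2 * h + 2) * N}" "\<forall>e\<in>E. e \<subseteq> V"
  shows "\<forall>(t, I)\<in>set (snake_layers col). t \<le> 2 * h + 1 \<and> interaction_layer E (snake_config t) I"
  unfolding snake_layers_def
  using interaction_layer_parity_layer[OF inj_on_brick_config[OF assms(1)] assms(2)]
    interaction_layer_parity_layers[OF inj_on_brick_config[OF assms(1)] assms(2),
      of "\<lambda>v. even (col v)" "\<lambda>v. odd (col v)"]
  by (simp del: config_0)

lemma snake_horizontal_covered:
  assumes "mid x = snake_pos h n j" "mid y = snake_pos h (Suc n) j" "j < 2 * h + 2" "Suc n < N"
    and "{x, y} \<in> E"
  shows "\<exists>(t, I)\<in>set (snake_layers col). {x, y} \<in> I"
  using snake_horizontal_in_layers[OF assms] unfolding snake_layers_def by auto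

lemma snake_vertical_covered:
  assumes "mid x = snake_pos h n j" "mid y = snake_pos h n (Suc j)" "Suc j < 2 * h + 2" "n < N"
    and "col x = n" "col y = n" "{x, y} \<in> E"
  shows "\<exists>(t, I)\<in>set (snake_layers col). {x, y} \<in> I"
  using snake_vertical_in_layers[OF assms] unfolding snake_layers_def by auto

end

section \<open>Optimal networks for the spinless grid\<close>

text \<open>The maximum degree of the \<open>M \<times> N\<close> grid, valid for \<open>M \<le> N\<close>.\<close>

definition grid2_max_degree :: "nat \<Rightarrow> nat \<Rightarrow> nat" where
  "grid2_max_degree M N = (if M = 1 then min 2 (N - 1) else if M = 2 then min 3 N else 4)"

lemma interaction_depth_ge_grid2:
  assumes net: "swap_network (grid2_V M N) (grid2_E M N) \<pi>0 Ls Is" and "1 \<le> M" "M \<le> N"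
  shows "grid2_max_degree M N \<le> length Is"
proof -
  have star: "card F \<le> length Is" if "F \<subseteq> grid2_E M N" "finite F" "\<forall>e\<in>F. x \<in> e" for F x
    using card_edges_at_vertex_le[OF net that] .
  consider "M = 1" "N \<le> 1" | "M = 1" "N = 2" | "M = 1" "3 \<le> N"
    | "M = 2" "N = 2" | "M = 2" "3 \<le> N" | "3 \<le> M"
    using assms(2,3) by linarith
  then show ?thesis
  proof cases
    case 1
    then show ?thesis by (simp add: grid2_max_degree_def)
  next
    case 2
    then show ?thesis
      using star[of "{{(0, 0), (0, 1)}}" "(0, 0)"] grid2_edge_n[of 0 M 0 N]
      by (simp add: grid2_max_degree_def)
  next
    case 3
    then show ?thesis
      using star[of "{{(0, 0), (0, 1)}, {(0, 1), (0, 2)}}" "(0, 1)"]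
        grid2_edge_n[of 0 M 0 N] grid2_edge_n[of 0 M 1 N]
      by (simp add: grid2_max_degree_def doubleton_eq_iff numeral_2_eq_2)
  next
    case 4
    then show ?thesis
      using star[of "{{(0, 0), (1, 0)}, {(0, 0), (0, 1)}}" "(0, 0)"]
        grid2_edge_m[of 0 M 0 N] grid2_edge_n[of 0 M 0 N]
      by (simp add: grid2_max_degree_def doubleton_eq_iff)
  next
    case 5
    then show ?thesis
      using star[of "{{(0, 0), (0, 1)}, {(0, 1), (0, 2)}, {(0, 1), (1, 1)}}" "(0, 1)"]
        grid2_edge_n[of 0 M 0 N] grid2_edge_n[of 0 M 1 N] grid2_edge_m[of 0 M 1 N]
      by (simp add: grid2_max_degree_def doubleton_eq_iff numeral_2_eq_2)
  next
    case 6
    then show ?thesis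
      using star[of "{{(0, 1), (1, 1)}, {(1, 1), (2, 1)}, {(1, 0), (1, 1)}, {(1, 1), (1, 2)}}"
          "(1, 1)"]
        grid2_edge_m[of 0 M 1 N] grid2_edge_m[of 1 M 1 N]
        grid2_edge_n[of 1 M 0 N] grid2_edge_n[of 1 M 1 N] assms(3)
      by (simp add: grid2_max_degree_def doubleton_eq_iff numeral_2_eq_2)
  qed
qed

definition column_layout :: "nat \<Rightarrow> nat \<times> nat \<Rightarrow> nat" where
  "column_layout M = (\<lambda>(m, n). n * M + m)"

lemma bij_betw_column_layout:
  "0 < M \<Longrightarrow> bij_betw (column_layout M) (grid2_V M N) {0..<M * N}"
  unfolding column_layout_def grid2_V_eq by (rule bij_betw_column_pos)

text \<open>Odd height \<open>M = 2 * h + 1\<close>: vertical neighbours are adjacent in the middle configuration, and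
  horizontal neighbours, at distance \<open>M\<close>, meet after \<open>h\<close> steps forward or backward.\<close>

definition odd_interactions :: "nat \<Rightarrow> nat \<Rightarrow> (nat \<times> (nat \<times> nat) set set) list" where
  "odd_interactions h N =
    (let E = grid2_E (2 * h + 1) N;
         c = brick_config ((2 * h + 1) * N) h (2 * h) (column_layout (2 * h + 1))
     in [(0, parity_layer E (c 0) (h + 1) (\<lambda>_. True)), (h, parity_layer E (c h) 0 (\<lambda>_. True)),
         (h, parity_layer E (c h) 1 (\<lambda>_. True)), (2 * h, parity_layer E (c (2 * h)) h (\<lambda>_. True))])"

lemma odd_interactions_cover:
  assumes "e \<in> grid2_E (2 * h + 1) N"
  shows "\<exists>(t, I)\<in>set (odd_interactions h N). e \<in> I"
proof -
  let ?M = "2 * h + 1" and ?E = "grid2_E (2 * h + 1) N"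
  let ?c = "brick_config (?M * N) h (2 * h) (column_layout ?M)"
  have "e \<in> parity_layer ?E (?c 0) (h + 1) (\<lambda>_. True) \<or> e \<in> parity_layer ?E (?c h) 0 (\<lambda>_. True) \<or>
    e \<in> parity_layer ?E (?c h) 1 (\<lambda>_. True) \<or> e \<in> parity_layer ?E (?c (2 * h)) h (\<lambda>_. True)"
    using assms
  proof (cases rule: grid2_E_cases)
    case (1 m n)
    have adj: "?c h (m, n) = n * ?M + m" "?c h (Suc m, n) = n * ?M + m + 1"
      by (simp_all add: brick_config_mid column_layout_def)
    show ?thesis
    proof (cases "even (n * ?M + m)")
      case True
      then have "e \<in> parity_layer ?E (?c h) 0 (\<lambda>_. True)"
        using assms adj unfolding 1(1) by (intro parity_layerI) simp_all
      then show ?thesis by blast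
    next
      case False
      then have "e \<in> parity_layer ?E (?c h) 1 (\<lambda>_. True)"
        using assms adj unfolding 1(1) by (intro parity_layerI) simp_all
      then show ?thesis by blast
    qed
  next
    case (2 m n)
    define p where "p = n * ?M + m"
    have mid: "column_layout ?M (m, n) = p" "column_layout ?M (m, Suc n) = p + 2 * h + 1"
      unfolding column_layout_def p_def by simp_all
    have q: "p + 2 * h + 1 < ?M * N"
      using column_pos_less[of m ?M "Suc n" N] 2 unfolding p_def by (simp add: algebra_simps)
    show ?thesis
    proof (cases "even p")
      case True
      then have "?c (h + h) (m, n) = p + h" "?c (h + h) (m, Suc n) = p + 2 * h + 1 - h"
        using brick_config_forward[of h "2 * h" _ "(m, n)" p "(m, Suc n)" h _ h] mid q by simp_all
      then have "e \<in> parity_layer ?E (?c (2 * h)) h (\<lambda>_. True)"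
        using True assms unfolding 2(1) by (intro parity_layerI) (simp_all add: mult_2)
      then show ?thesis by blast
    next
      case False
      then have "?c (h - h) (m, n) = p + h" "?c (h - h) (m, Suc n) = p + 2 * h + 1 - h"
        using brick_config_backward[of h "2 * h" _ "(m, n)" p "(m, Suc n)" h _ h] mid q by simp_all
      then have "e \<in> parity_layer ?E (?c 0) (h + 1) (\<lambda>_. True)"
        using False assms unfolding 2(1) by (intro parity_layerI) simp_all
      then show ?thesis by blast
    qed
  qed
  then show ?thesis
    unfolding odd_interactions_def Let_def by auto
qed

lemma odd_network:
  "swap_network (grid2_V (2 * h + 1) N) (grid2_E (2 * h + 1) N)
     (brick_start ((2 * h + 1) * N) h (2 * h) (column_layout (2 * h + 1)))
     (brick_layers ((2 * h + 1) * N) h (2 * h)) (odd_interactions h N)"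
proof (rule swap_network_brick)
  show bij: "bij_betw (column_layout (2 * h + 1)) (grid2_V (2 * h + 1) N) {0..<(2 * h + 1) * N}"
    by (rule bij_betw_column_layout) simp
  show "card (grid2_V (2 * h + 1) N) = (2 * h + 1) * N"
    by (rule card_grid2_V)
  show "\<forall>(t, I)\<in>set (odd_interactions h N). t \<le> 2 * h \<and> interaction_layer (grid2_E (2 * h + 1) N)
    (brick_config ((2 * h + 1) * N) h (2 * h) (column_layout (2 * h + 1)) t) I"
    unfolding odd_interactions_def Let_def
    using interaction_layer_parity_layer[OF inj_on_brick_config[OF bij] grid2_E_subset]
    by (simp del: config_0)
  show "\<forall>e\<in>grid2_E (2 * h + 1) N. \<exists>(t, I)\<in>set (odd_interactions h N). e \<in> I"
    using odd_interactions_cover by blast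
qed

definition path_interactions :: "nat \<Rightarrow> (nat \<times> (nat \<times> nat) set set) list" where
  "path_interactions N =
    (let E = grid2_E 1 N; c = brick_config N 0 0 (column_layout 1) 0;
         even_edges = (0, parity_layer E c 0 (\<lambda>_. True));
         odd_edges = (0, parity_layer E c 1 (\<lambda>_. True))
     in if N \<le> 1 then [] else if N = 2 then [even_edges] else [even_edges, odd_edges])"

lemma path_network:
  "swap_network (grid2_V 1 N) (grid2_E 1 N)
     (brick_start N 0 0 (column_layout 1)) (brick_layers N 0 0) (path_interactions N)"
proof (rule swap_network_brick)
  let ?c = "brick_config N 0 0 (column_layout 1) 0" and ?E = "grid2_E 1 N"
  show bij: "bij_betw (column_layout 1) (grid2_V 1 N) {0..<N}"
    using bij_betw_column_layout[of 1 N] by simp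
  show "card (grid2_V 1 N) = N"
    by (simp add: card_grid2_V)
  have "set (path_interactions N) \<subseteq>
    {(0, parity_layer ?E ?c 0 (\<lambda>_. True)), (0, parity_layer ?E ?c 1 (\<lambda>_. True))}"
    unfolding path_interactions_def Let_def by auto
  then show "\<forall>(t, I)\<in>set (path_interactions N).
    t \<le> 0 \<and> interaction_layer ?E (brick_config N 0 0 (column_layout 1) t) I"
    using interaction_layer_parity_layer[OF inj_on_brick_config[OF bij] grid2_E_subset]
    by (auto simp del: config_0)
  show "\<forall>e\<in>?E. \<exists>(t, I)\<in>set (path_interactions N). e \<in> I"
  proof
    fix e assume "e \<in> ?E"
    then obtain n where e: "e = {(0, n), (0, Suc n)}" "Suc n < N"
      by (cases rule: grid2_E_cases) auto
    have c: "?c (0, n) = n" "?c (0, Suc n) = Suc n"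
      by (simp_all add: brick_start_def column_layout_def)
    show "\<exists>(t, I)\<in>set (path_interactions N). e \<in> I"
    proof (cases "even n")
      case True
      then have "e \<in> parity_layer ?E ?c 0 (\<lambda>_. True)"
        using \<open>e \<in> ?E\<close> c unfolding e(1) by (intro parity_layerI) simp_all
      then show ?thesis
        using e(2) unfolding path_interactions_def Let_def by auto
    next
      case False
      then have "e \<in> parity_layer ?E ?c 1 (\<lambda>_. True)" "2 < N"
        using \<open>e \<in> ?E\<close> c e(2) unfolding e(1) by (intro parity_layerI, simp_all) presburger
      then show ?thesis
        unfolding path_interactions_def Let_def by auto
    qed
  qed
qed

lemma length_path_interactions: "length (path_interactions N) = min 2 (N - 1)"
  unfolding path_interactions_def Let_def by simp

definition square_interactions :: "(nat \<times> (nat \<times> nat) set set) list" where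
  "square_interactions =
    (let E = grid2_E 2 2; c = brick_config 4 1 1 (column_layout 2)
     in [(0, parity_layer E (c 0) 0 (\<lambda>_. True)), (1, parity_layer E (c 1) 0 (\<lambda>_. True))])"

lemma square_network:
  "swap_network (grid2_V 2 2) (grid2_E 2 2)
     (brick_start 4 1 1 (column_layout 2)) (brick_layers 4 1 1) square_interactions"
proof (rule swap_network_brick)
  let ?c = "brick_config 4 1 1 (column_layout 2)" and ?E = "grid2_E 2 2"
  show bij: "bij_betw (column_layout 2) (grid2_V 2 2) {0..<4}"
    using bij_betw_column_layout[of 2 2] by simp
  show "card (grid2_V 2 2) = 4"
    by (simp add: card_grid2_V)
  show "\<forall>(t, I)\<in>set square_interactions. t \<le> 1 \<and> interaction_layer ?E (?c t) I"
    unfolding square_interactions_def Let_def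
    using interaction_layer_parity_layer[OF inj_on_brick_config[OF bij] grid2_E_subset]
    by (simp del: config_0)
  have c1: "?c 1 = column_layout 2"
    by (simp add: brick_config_mid)
  have step: "?c 0 v = swap_pos (brick 4 1) (column_layout 2 v)" for v
  proof -
    have "?c 0 v = swap_pos (brick_layers 4 1 1 ! 0) (?c (Suc 0) v)"
      by (rule config_Suc_back[OF _ swap_layer_brick_layers]) simp
    then show ?thesis
      using c1 by (simp add: nth_brick_layers)
  qed
  have c0: "?c 0 (0, 0) = 0" "?c 0 (0, 1) = 1" "?c 0 (1, 0) = 2" "?c 0 (1, 1) = 3"
    unfolding step by (simp_all add: swap_pos_brick column_layout_def)
  show "\<forall>e\<in>?E. \<exists>(t, I)\<in>set square_interactions. e \<in> I"
  proof
    fix e assume e: "e \<in> ?E"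
    then consider n where "e = {(0, n), (1, n)}" "n < 2" | m where "e = {(m, 0), (m, 1)}" "m < 2"
      by (cases rule: grid2_E_cases) auto
    then show "\<exists>(t, I)\<in>set square_interactions. e \<in> I"
    proof cases
      case (1 n)
      then have "e \<in> parity_layer ?E (?c 1) 0 (\<lambda>_. True)"
        using e unfolding 1(1) c1 by (intro parity_layerI) (simp_all add: column_layout_def)
      then show ?thesis
        unfolding square_interactions_def Let_def by auto
    next
      case (2 m)
      then have "e \<in> parity_layer ?E (?c 0) 0 (\<lambda>_. True)"
        using e c0 unfolding 2(1) by (intro parity_layerI) (auto simp: less_2_cases_iff)
      then show ?thesis
        unfolding square_interactions_def Let_def by auto
    qed
  qed
qed

definition snake_layout :: "nat \<Rightarrow> nat \<times> nat \<Rightarrow> nat" where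
  "snake_layout h = (\<lambda>(m, n). snake_pos h n m)"

lemma bij_betw_snake_layout:
  "bij_betw (snake_layout h) (grid2_V (2 * h + 2) N) {0..<(2 * h + 2) * N}"
  unfolding snake_layout_def grid2_V_eq by (rule bij_betw_snake_pos)

definition even_interactions :: "nat \<Rightarrow> nat \<Rightarrow> (nat \<times> (nat \<times> nat) set set) list" where
  "even_interactions h N = snake_layers h N (snake_layout h) (grid2_E (2 * h + 2) N) snd"

lemma even_network:
  "swap_network (grid2_V (2 * h + 2) N) (grid2_E (2 * h + 2) N)
     (brick_start ((2 * h + 2) * N) h (2 * h + 1) (snake_layout h))
     (brick_layers ((2 * h + 2) * N) h (2 * h + 1)) (even_interactions h N)"
proof (rule swap_network_brick[OF bij_betw_snake_layout])
  show "card (grid2_V (2 * h + 2) N) = (2 * h + 2) * N"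
    by (rule card_grid2_V)
  show "\<forall>(t, I)\<in>set (even_interactions h N). t \<le> 2 * h + 1 \<and>
    interaction_layer (grid2_E (2 * h + 2) N) (snake_config h N (snake_layout h) t) I"
    unfolding even_interactions_def by (rule snake_layers_valid[OF bij_betw_snake_layout grid2_E_subset])
  show "\<forall>e\<in>grid2_E (2 * h + 2) N. \<exists>(t, I)\<in>set (even_interactions h N). e \<in> I"
  proof
    fix e assume e: "e \<in> grid2_E (2 * h + 2) N"
    then show "\<exists>(t, I)\<in>set (even_interactions h N). e \<in> I"
    proof (cases rule: grid2_E_cases)
      case (1 m n)
      then show ?thesis
        using e unfolding 1(1) even_interactions_def
        by (intro snake_vertical_covered[where j = m]) (simp_all add: snake_layout_def)
    next
      case (2 m n)
      then show ?thesis
        using e unfolding 2(1) even_interactions_def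
        by (intro snake_horizontal_covered[where j = m]) (simp_all add: snake_layout_def)
    qed
  qed
qed

definition ladder_interactions :: "nat \<Rightarrow> (nat \<times> (nat \<times> nat) set set) list" where
  "ladder_interactions N =
    (let E = grid2_E 2 N; c = brick_config (2 * N) 0 1 (snake_layout 0)
     in [(0, parity_layer E (c 0) 0 (\<lambda>_. True)), (0, parity_layer E (c 0) 1 (\<lambda>_. True)),
         (1, parity_layer E (c 1) 1 (\<lambda>_. True))])"

lemma ladder_network:
  "swap_network (grid2_V 2 N) (grid2_E 2 N)
     (brick_start (2 * N) 0 1 (snake_layout 0)) (brick_layers (2 * N) 0 1) (ladder_interactions N)"
proof (rule swap_network_brick)
  show bij: "bij_betw (snake_layout 0) (grid2_V 2 N) {0..<2 * N}"
  proof -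
    have "2 * 0 + 2 = (2 :: nat)"
      by simp
    then show ?thesis
      using bij_betw_snake_layout[of 0 N] by metis
  qed
  show "card (grid2_V 2 N) = 2 * N"
    by (rule card_grid2_V)
  show "\<forall>(t, I)\<in>set (ladder_interactions N).
    t \<le> 1 \<and> interaction_layer (grid2_E 2 N) (brick_config (2 * N) 0 1 (snake_layout 0) t) I"
    unfolding ladder_interactions_def Let_def
    using interaction_layer_parity_layer[OF inj_on_brick_config[OF bij] grid2_E_subset]
    by (simp del: config_0)
  have c: "snake_config 0 N (snake_layout 0) = brick_config (2 * N) 0 1 (snake_layout 0)"
    by (simp add: mult_2)
  show "\<forall>e\<in>grid2_E 2 N. \<exists>(t, I)\<in>set (ladder_interactions N). e \<in> I"
  proof
    fix e assume e: "e \<in> grid2_E 2 N"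
    then show "\<exists>(t, I)\<in>set (ladder_interactions N). e \<in> I"
    proof (cases rule: grid2_E_cases)
      case (1 m n)
      then show ?thesis
        using snake_vertical_even_in_layer[where h = 0 and N = N and mid = "snake_layout 0"
          and x = "(m, n)" and y = "(Suc m, n)" and E = "grid2_E 2 N", unfolded c] e
        unfolding ladder_interactions_def Let_def by (auto simp: snake_layout_def)
    next
      case (2 m n)
      then show ?thesis
        using snake_horizontal_in_layers[where h = 0 and N = N and mid = "snake_layout 0"
          and x = "(m, n)" and y = "(m, Suc n)" and E = "grid2_E 2 N", unfolded c] e
        unfolding ladder_interactions_def Let_def by (auto simp: snake_layout_def)
    qed
  qed
qed

lemma grid2_optimal_network:
  assumes "1 \<le> M" "M \<le> N"
  shows "\<exists>\<pi>0 Ls Is. swap_network (grid2_V M N) (grid2_E M N) \<pi>0 Ls Is \<and>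
    length Ls = M - 1 \<and> length Is = grid2_max_degree M N"
proof -
  consider (path) "M = 1" | (odd) h where "M = 2 * h + 1" "1 \<le> h" | (square) "M = 2" "N = 2"
    | (ladder) "M = 2" "3 \<le> N" | (even) h where "M = 2 * h + 2" "1 \<le> h"
  proof -
    have "M = 1 \<or> M = 2 * (M div 2) + 1 \<and> 1 \<le> M div 2 \<or> M = 2 \<and> N = 2 \<or> M = 2 \<and> 3 \<le> N \<or>
      M = 2 * (M div 2 - 1) + 2 \<and> 1 \<le> M div 2 - 1"
      using assms by presburger
    then show ?thesis
      using that by blast
  qed
  then show ?thesis
  proof cases
    case path
    show ?thesis
      unfolding path using path_network[of N] by (intro exI conjI, assumption)
        (simp_all add: length_path_interactions grid2_max_degree_def)
  next
    case (odd h)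
    show ?thesis
      unfolding odd(1) using odd_network[of h N] by (intro exI conjI, assumption)
        (use odd(2) in \<open>simp_all add: odd_interactions_def Let_def grid2_max_degree_def\<close>)
  next
    case square
    show ?thesis
      unfolding square using square_network by (intro exI conjI, assumption)
        (simp_all add: square_interactions_def Let_def grid2_max_degree_def)
  next
    case ladder
    show ?thesis
      unfolding ladder(1) using ladder_network[of N] by (intro exI conjI, assumption)
        (use ladder(2) in \<open>simp_all add: ladder_interactions_def Let_def grid2_max_degree_def\<close>)
  next
    case (even h)
    show ?thesis
      unfolding even(1) using even_network[of h N] by (intro exI conjI, assumption)
        (use even(2) in \<open>simp_all add: even_interactions_def snake_layers_def grid2_max_degree_def\<close>)
  qed
qed

section \<open>A network for the grid with spin\<close>

text \<open>Row \<open>m\<close> of both spin layers occupies the snake rows \<open>2 * m\<close> and \<open>2 * m + 1\<close>, in an order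
  alternating with \<open>m\<close>. Then both rungs and vertical edges join snake rows at distance 1 or 3.\<close>

definition spin_row :: "nat \<Rightarrow> nat \<Rightarrow> nat" where
  "spin_row a m = 2 * m + (if even m then a else 1 - a)"

definition spin_layout :: "nat \<Rightarrow> nat \<times> nat \<times> nat \<Rightarrow> nat" where
  "spin_layout h = (\<lambda>(a, m, n). snake_pos h n (spin_row a m))"

lemma bij_betw_spin_row:
  "bij_betw (\<lambda>(a, m, n). (spin_row a m, n)) (grid3_V 2 M N) ({0..<2 * M} \<times> {0..<N})"
  by (rule bij_betw_byWitness[where
        f' = "\<lambda>(j, n). (if even (j div 2) then j mod 2 else 1 - j mod 2, j div 2, n)"])
    (auto simp: spin_row_def less_2_cases_iff less_mult_imp_div_less)

lemma bij_betw_spin_layout: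
  "bij_betw (spin_layout h) (grid3_V 2 (Suc h) N) {0..<(2 * h + 2) * N}"
proof -
  have "bij_betw ((\<lambda>(j, n). snake_pos h n j) \<circ> (\<lambda>(a, m, n). (spin_row a m, n)))
    (grid3_V 2 (Suc h) N) {0..<(2 * h + 2) * N}"
    using bij_betw_spin_row[of "Suc h" N] bij_betw_snake_pos[of h N] by (auto intro: bij_betw_trans)
  moreover have "(\<lambda>(j, n). snake_pos h n j) \<circ> (\<lambda>(a, m, n). (spin_row a m, n)) = spin_layout h"
    by (auto simp: spin_layout_def)
  ultimately show ?thesis
    by simp
qed

definition spin_interactions :: "nat \<Rightarrow> nat \<Rightarrow> (nat \<times> (nat \<times> nat \<times> nat) set set) list" where
  "spin_interactions h N =
    (let E = grid3_E 2 (Suc h) N; c = snake_config h N (spin_layout h)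
     in snake_layers h N (spin_layout h) E (\<lambda>v. snd (snd v)) @
        [(h, parity_layer E (c h) 1 (\<lambda>v. odd (snd (snd v)))),
         (h + 1, parity_layer E (c (h + 1)) 1 (\<lambda>v. even (snd (snd v))))])"

lemma spin_interactions_cover:
  assumes e: "e \<in> grid3_E 2 (Suc h) N"
  shows "\<exists>(t, I)\<in>set (spin_interactions h N). e \<in> I"
proof -
  let ?E = "grid3_E 2 (Suc h) N"
  have "set (snake_layers h N (spin_layout h) ?E (\<lambda>v. snd (snd v))) \<subseteq> set (spin_interactions h N)"
    unfolding spin_interactions_def Let_def by auto
  note vertical = snake_vertical_covered[where h = h and N = N and mid = "spin_layout h" and E = ?E
      and col = "\<lambda>v. snd (snd v)"]
  from e show ?thesis
  proof (cases rule: grid3_E_cases)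
    case (1 a m n)
    then have "e = {(0, m, n), (1, m, n)}" "{(1, m, n), (0, m, n)} \<in> ?E"
      using e by (simp_all add: insert_commute)
    then show ?thesis
      using 1 e \<open>set (snake_layers _ _ _ _ _) \<subseteq> _\<close>
        vertical[where x = "(0, m, n)" and y = "(1, m, n)" and j = "2 * m"]
        vertical[where x = "(1, m, n)" and y = "(0, m, n)" and j = "2 * m"]
      by (cases "even m") (auto simp: spin_layout_def spin_row_def insert_commute)
  next
    case (2 a m n)
    show ?thesis
    proof (cases "even m = (a = 0)")
      case True
      have "e \<in> parity_layer ?E (snake_config h N (spin_layout h) (h + 1)) 1 (\<lambda>v. even (snd (snd v))) \<or>
        e \<in> parity_layer ?E (snake_config h N (spin_layout h) h) 1 (\<lambda>v. odd (snd (snd v)))"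
        unfolding 2(1) by (rule snake_vertical_gap_in_layers[where j = "2 * m"])
          (use 2 e True in
            \<open>auto simp: spin_layout_def spin_row_def numeral_3_eq_3 less_2_cases_iff\<close>)
      then show ?thesis
        unfolding spin_interactions_def Let_def by auto
    next
      case False
      have "\<exists>(t, I)\<in>set (snake_layers h N (spin_layout h) ?E (\<lambda>v. snd (snd v))). e \<in> I"
        unfolding 2(1) by (rule vertical[where j = "2 * m + 1"])
          (use 2 e False in \<open>auto simp: spin_layout_def spin_row_def less_2_cases_iff\<close>)
      with \<open>set (snake_layers _ _ _ _ _) \<subseteq> _\<close> show ?thesis
        by blast
    qed
  next
    case (3 a m n)
    have "\<exists>(t, I)\<in>set (snake_layers h N (spin_layout h) ?E (\<lambda>v. snd (snd v))). e \<in> I"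
      unfolding 3(1) by (rule snake_horizontal_covered[where j = "spin_row a m"])
        (use 3 e in \<open>auto simp: spin_layout_def spin_row_def\<close>)
    with \<open>set (snake_layers _ _ _ _ _) \<subseteq> _\<close> show ?thesis
      by blast
  qed
qed

lemma spin_network:
  "swap_network (grid3_V 2 (Suc h) N) (grid3_E 2 (Suc h) N)
     (brick_start ((2 * h + 2) * N) h (2 * h + 1) (spin_layout h))
     (brick_layers ((2 * h + 2) * N) h (2 * h + 1)) (spin_interactions h N)"
proof (rule swap_network_brick[OF bij_betw_spin_layout])
  let ?E = "grid3_E 2 (Suc h) N"
  show "card (grid3_V 2 (Suc h) N) = (2 * h + 2) * N"
    by (simp add: card_grid3_V)
  note inj = inj_on_brick_config[OF bij_betw_spin_layout]
  show "\<forall>(t, I)\<in>set (spin_interactions h N).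
    t \<le> 2 * h + 1 \<and> interaction_layer ?E (snake_config h N (spin_layout h) t) I"
    unfolding spin_interactions_def Let_def
    using snake_layers_valid[OF bij_betw_spin_layout grid3_E_subset, where col = "\<lambda>v. snd (snd v)"]
      interaction_layer_parity_layer[OF inj grid3_E_subset]
    by (simp del: config_0)
  show "\<forall>e\<in>?E. \<exists>(t, I)\<in>set (spin_interactions h N). e \<in> I"
    using spin_interactions_cover by blast
qed

lemma grid3_spin_network:
  assumes "1 \<le> M"
  shows "\<exists>\<pi>0 Ls Is. swap_network (grid3_V 2 M N) (grid3_E 2 M N) \<pi>0 Ls Is \<and>
    length Ls = 2 * M - 1 \<and> length Is = 6"
proof -
  obtain h where "M = Suc h"
    using assms not0_implies_Suc by fastforce
  then show ?thesis
    using spin_network[of h N] by (intro exI conjI, simp)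
      (simp_all add: spin_interactions_def snake_layers_def Let_def)
qed

theorem theorem1:
  shows "(\<forall>M N :: nat. 1 \<le> M \<and> M \<le> N \<longrightarrow>
            d_swap (grid2_V M N) (grid2_E M N) = M - 1 \<and>
            (\<exists>\<pi>0 Ls Is. swap_network (grid2_V M N) (grid2_E M N) \<pi>0 Ls Is \<and>
               length Ls = M - 1 \<and>
               length Is = min_interaction_depth (grid2_V M N) (grid2_E M N))) \<and>
         (\<forall>M N :: nat. 2 \<le> M \<and> M \<le> N \<longrightarrow>
            d_swap (grid3_V 2 M N) (grid3_E 2 M N) = 2 * M - 1 \<and>
            (\<exists>\<pi>0 Ls Is. swap_network (grid3_V 2 M N) (grid3_E 2 M N) \<pi>0 Ls Is \<and>
               length Ls = 2 * M - 1 \<and> length Is = 6))"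
proof (intro conjI allI impI)
  fix M N :: nat assume MN: "1 \<le> M \<and> M \<le> N"
  then obtain \<pi>0 Ls Is where net: "swap_network (grid2_V M N) (grid2_E M N) \<pi>0 Ls Is"
    and depth: "length Ls = M - 1" and layers: "length Is = grid2_max_degree M N"
    using grid2_optimal_network by blast
  show "d_swap (grid2_V M N) (grid2_E M N) = M - 1"
    using d_swap_eqI[OF net depth] swap_depth_ge_grid2 MN by blast
  have "min_interaction_depth (grid2_V M N) (grid2_E M N) = length Is"
    using min_interaction_depth_eqI[OF net layers] interaction_depth_ge_grid2 MN layers by auto
  with net depth
  show "\<exists>\<pi>0 Ls Is. swap_network (grid2_V M N) (grid2_E M N) \<pi>0 Ls Is \<and> length Ls = M - 1 \<and>
      length Is = min_interaction_depth (grid2_V M N) (grid2_E M N)"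
    by metis
next
  fix M N :: nat assume MN: "2 \<le> M \<and> M \<le> N"
  then have "1 \<le> M"
    by simp
  then obtain \<pi>0 Ls Is where net: "swap_network (grid3_V 2 M N) (grid3_E 2 M N) \<pi>0 Ls Is"
    and depth: "length Ls = 2 * M - 1" and layers: "length Is = 6"
    using grid3_spin_network by blast
  show "d_swap (grid3_V 2 M N) (grid3_E 2 M N) = 2 * M - 1"
    using d_swap_eqI[OF net depth] swap_depth_ge_grid3_spin MN by blast
  show "\<exists>\<pi>0 Ls Is. swap_network (grid3_V 2 M N) (grid3_E 2 M N) \<pi>0 Ls Is \<and>
      length Ls = 2 * M - 1 \<and> length Is = 6"
    using net depth layers by blast
qed

end
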